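(* Let $\Phi$ be an automorphism of $(Ass\text{-}\mathbf K)^0$ such that $\Phi(A)=A$ and $s_A(x)=x$ for all $x\in X_A$, for every object $A$. Then all of the following hold. (1) There is a permutation $\tilde s$ of $\mathbf K$ with $s_A\circ f_A=f_A\circ\tilde s$ for every object $A$. (2) Put $\tilde0=\tilde s(0)$ and $\tilde1=\tilde s(1)$, identified with their images in each algebra. Then $\tilde1\neq\tilde0$. (3) For every object $A$ and all $u,v\in A$, $$s_A(u+v)=s_A(u)+s_A(v)-\tilde0.$$ (4) Exactly one of the following two alternatives holds: (I) for every object $A$ and all $u,v\in A$, $s_A(uv)=(\tilde1-\tilde0)^{-1}(s_A(u)-\tilde0)(s_A(v)-\tilde0)+\tilde0$; (II) for every object $A$ and all $u,v\in A$, $s_A(uv)=(\tilde1-\tilde0)^{-1}(s_A(v)-\tilde0)(s_A(u)-\tilde0)+\tilde0$.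
   Context: $\mathbf K$ is an infinite field. A $\mathbf K$-algebra is an associative unital ring $A$ with a unital ring homomorphism $f_A:\mathbf K\to Z(A)$, and homomorphisms are unital ring homomorphisms commuting with the structure maps. $(Ass\text{-}\mathbf K)^0$ is the category of free associative $\mathbf K$-algebras $\mathbf K\langle X_A\rangle$ on finite subsets $X_A$ of a fixed infinite set $X_0$, with $X_A$ the designated basis. $F_1$ is the free algebra on one $x_0\in X_0$. The main function of an automorphism $\Phi$ fixing $F_1$ is $s_A(a)=\Phi(\alpha_a)(x_0)$, where $\alpha_a:F_1\to A$ sends $x_0\mapsto a$. It satisfies $\Phi(\mu)=s_B\circ\mu\circ s_A^{-1}$. *)

theory Defs
  imports Main "HOL-Library.FuncSet"
begin

text \<open>Free associative algebras K<X_A>, X_A a finite subset of an infinite ambient type 'x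
(playing the role of X_0). An element is a finitely supported coefficient function on words
(lists of letters). All free algebras live inside the common ambient space of such functions;
the object A is identified with its finite set of generators X_A.\<close>

definition fa_carrier :: "'x set \<Rightarrow> ('x list \<Rightarrow> 'k::field) set" where
  "fa_carrier X = {p. finite {w. p w \<noteq> 0} \<and> (\<forall>w. p w \<noteq> 0 \<longrightarrow> set w \<subseteq> X)}"

definition fa_add :: "('x list \<Rightarrow> 'k::field) \<Rightarrow> ('x list \<Rightarrow> 'k) \<Rightarrow> ('x list \<Rightarrow> 'k)" where
  "fa_add p q = (\<lambda>w. p w + q w)"

definition fa_sub :: "('x list \<Rightarrow> 'k::field) \<Rightarrow> ('x list \<Rightarrow> 'k) \<Rightarrow> ('x list \<Rightarrow> 'k)" where
  "fa_sub p q = (\<lambda>w. p w - q w)"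

definition fa_mul :: "('x list \<Rightarrow> 'k::field) \<Rightarrow> ('x list \<Rightarrow> 'k) \<Rightarrow> ('x list \<Rightarrow> 'k)" where
  "fa_mul p q = (\<lambda>w. \<Sum>i\<le>length w. p (take i w) * q (drop i w))"

definition fa_const :: "'k::field \<Rightarrow> ('x list \<Rightarrow> 'k)" where
  "fa_const c = (\<lambda>w. if w = [] then c else 0)"

definition fa_var :: "'x \<Rightarrow> ('x list \<Rightarrow> 'k::field)" where
  "fa_var x = (\<lambda>w. if w = [x] then 1 else 0)"

fun word_eval :: "('x \<Rightarrow> ('y list \<Rightarrow> 'k::field)) \<Rightarrow> 'x list \<Rightarrow> ('y list \<Rightarrow> 'k)" where
  "word_eval \<sigma> [] = fa_const 1"
| "word_eval \<sigma> (x # w) = fa_mul (\<sigma> x) (word_eval \<sigma> w)"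

definition fa_eval :: "('x \<Rightarrow> ('y list \<Rightarrow> 'k::field)) \<Rightarrow> ('x list \<Rightarrow> 'k) \<Rightarrow> ('y list \<Rightarrow> 'k)" where
  "fa_eval \<sigma> p = (\<lambda>u. \<Sum>v\<in>{v. p v \<noteq> 0}. p v * word_eval \<sigma> v u)"

definition fa_hom :: "'x set \<Rightarrow> 'x set \<Rightarrow> (('x list \<Rightarrow> 'k::field) \<Rightarrow> ('x list \<Rightarrow> 'k)) set" where
  "fa_hom A B = {h. h \<in> extensional (fa_carrier A) \<and> h \<in> fa_carrier A \<rightarrow> fa_carrier B
     \<and> (\<forall>p\<in>fa_carrier A. \<forall>q\<in>fa_carrier A.
          h (fa_add p q) = fa_add (h p) (h q) \<and> h (fa_mul p q) = fa_mul (h p) (h q))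
     \<and> (\<forall>c. h (fa_const c) = fa_const c)}"

definition fa_id :: "'x set \<Rightarrow> ('x list \<Rightarrow> 'k::field) \<Rightarrow> ('x list \<Rightarrow> 'k)" where
  "fa_id A = restrict (\<lambda>p. p) (fa_carrier A)"

definition fa_comp :: "'x set \<Rightarrow> (('x list \<Rightarrow> 'k::field) \<Rightarrow> ('x list \<Rightarrow> 'k))
     \<Rightarrow> (('x list \<Rightarrow> 'k) \<Rightarrow> ('x list \<Rightarrow> 'k)) \<Rightarrow> ('x list \<Rightarrow> 'k) \<Rightarrow> ('x list \<Rightarrow> 'k)" where
  "fa_comp A g f = restrict (g \<circ> f) (fa_carrier A)"

text \<open>An automorphism of (Ass-K)^0 acting as identity on objects: on each hom-set Hom(A,B)
a bijection onto Hom(A,B), compatible with composition and identities.\<close>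
definition obj_fixing_auto ::
  "('x set \<Rightarrow> 'x set \<Rightarrow> (('x list \<Rightarrow> 'k::field) \<Rightarrow> ('x list \<Rightarrow> 'k)) \<Rightarrow> (('x list \<Rightarrow> 'k) \<Rightarrow> ('x list \<Rightarrow> 'k))) \<Rightarrow> bool"
  where
  "obj_fixing_auto \<Phi> \<longleftrightarrow>
     (\<forall>A B. finite A \<longrightarrow> finite B \<longrightarrow> bij_betw (\<Phi> A B) (fa_hom A B) (fa_hom A B))
   \<and> (\<forall>A B C f g. finite A \<longrightarrow> finite B \<longrightarrow> finite C \<longrightarrow> f \<in> fa_hom A B \<longrightarrow> g \<in> fa_hom B C \<longrightarrow>
        \<Phi> A C (fa_comp A g f) = fa_comp A (\<Phi> B C g) (\<Phi> A B f))
   \<and> (\<forall>A. finite A \<longrightarrow> \<Phi> A A (fa_id A) = fa_id A)"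

definition alpha :: "'x \<Rightarrow> ('x list \<Rightarrow> 'k::field) \<Rightarrow> ('x list \<Rightarrow> 'k) \<Rightarrow> ('x list \<Rightarrow> 'k)" where
  "alpha x0 a = restrict (fa_eval (\<lambda>_. a)) (fa_carrier {x0})"

definition main_fun ::
  "('x set \<Rightarrow> 'x set \<Rightarrow> (('x list \<Rightarrow> 'k::field) \<Rightarrow> ('x list \<Rightarrow> 'k)) \<Rightarrow> (('x list \<Rightarrow> 'k) \<Rightarrow> ('x list \<Rightarrow> 'k)))
    \<Rightarrow> 'x \<Rightarrow> 'x set \<Rightarrow> ('x list \<Rightarrow> 'k) \<Rightarrow> ('x list \<Rightarrow> 'k)" where
  "main_fun \<Phi> x0 A a = \<Phi> {x0} A (alpha x0 a) (fa_var x0)"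

end

(* Every morphism of free algebras is a substitution, so by naturality of s the value
   s(u \<star> v) of \<star> \<in> {+, \<cdot>} is obtained by substituting s u, s v for x, y in the law
   w = s(x \<star> y) \<in> K<x,y>. Identities of \<star> in which a substitution is undone, (x - y) + y = x,
   or is additive in one variable, x(y + z) = xy + xz, force w to have degree at most one in x
   and in y (a leading-word argument), so w is a combination of 1, x, y, xy and yx. Its
   coefficients are then fixed by commutativity, the unit and associativity for addition, and by
   x \<cdot> 0 = 0, x \<cdot> 1 = x and associativity for multiplication; associativity forbids w to contain both
   xy and yx. *)

theory Submission
  imports Defs "HOL-Library.Product_Lexorder"
begin

section \<open>Arithmetic of free algebras\<close>

definition supp :: "('x list \<Rightarrow> 'k::zero) \<Rightarrow> 'x list set" where
  "supp p = {w. p w \<noteq> 0}"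

definition fa_smul :: "'k::field \<Rightarrow> ('x list \<Rightarrow> 'k) \<Rightarrow> ('x list \<Rightarrow> 'k)" where
  "fa_smul k p = (\<lambda>w. k * p w)"

lemma append_splits_eq_image: "{(u,v). u @ v = w} = (\<lambda>i. (take i w, drop i w)) ` {..length w}"
proof (intro equalityI subsetI)
  fix x assume "x \<in> {(u,v). u @ v = w}"
  then obtain u v where "x = (u,v)" "u @ v = w" by auto
  then show "x \<in> (\<lambda>i. (take i w, drop i w)) ` {..length w}"
    by (intro image_eqI[where x="length u"]) auto
qed auto

lemma finite_append_splits: "finite {(u,v). u @ v = w}"
  by (simp add: append_splits_eq_image)

lemma fa_mul_eq_sum_splits: "fa_mul p q w = (\<Sum>(u,v)\<in>{(u,v). u @ v = w}. p u * q v)"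
  unfolding fa_mul_def
  by (rule sum.reindex_bij_witness[where j="\<lambda>i. (take i w, drop i w)" and i="\<lambda>(u,v). length u"]) auto

lemma fa_mul_assoc: "fa_mul (fa_mul p q) r = fa_mul p (fa_mul q r)"
proof
  fix w :: "'a list"
  have "fa_mul (fa_mul p q) r w = (\<Sum>(a,t)\<in>{(u,v). u @ v = w}. \<Sum>(u,v)\<in>{(u,v). u @ v = a}. p u * q v * r t)"
    by (simp add: fa_mul_eq_sum_splits sum_distrib_right case_prod_beta)
  also have "\<dots> = (\<Sum>x\<in>Sigma {(u,v). u @ v = w} (\<lambda>(a,t). {(u,v). u @ v = a}). case x of ((a,t),(u,v)) \<Rightarrow> p u * q v * r t)"
    by (subst sum.Sigma[symmetric]) (auto simp: finite_append_splits case_prod_beta)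
  also have "\<dots> = (\<Sum>(u,v,t)\<in>{(u,v,t). u @ v @ t = w}. p u * q v * r t)"
    by (rule sum.reindex_bij_witness[where i="\<lambda>(u,v,t). ((u @ v, t), (u, v))" and j="\<lambda>((a,t),(u,v)). (u,v,t)"]) auto
  also have "\<dots> = (\<Sum>x\<in>Sigma {(u,v). u @ v = w} (\<lambda>(u,b). {(v,t). v @ t = b}). case x of ((u,b),(v,t)) \<Rightarrow> p u * q v * r t)"
    by (rule sum.reindex_bij_witness[where i="\<lambda>((u,b),(v,t)). (u,v,t)" and j="\<lambda>(u,v,t). ((u, v @ t), (v, t))"]) auto
  also have "\<dots> = (\<Sum>(u,b)\<in>{(u,v). u @ v = w}. \<Sum>(v,t)\<in>{(u,v). u @ v = b}. p u * q v * r t)"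
    by (subst sum.Sigma[symmetric]) (auto simp: finite_append_splits case_prod_beta)
  also have "\<dots> = fa_mul p (fa_mul q r) w"
    by (simp add: fa_mul_eq_sum_splits sum_distrib_left case_prod_beta mult.assoc)
  finally show "fa_mul (fa_mul p q) r w = fa_mul p (fa_mul q r) w" .
qed

lemma fa_mul_const_left: "fa_mul (fa_const k) q = fa_smul k q"
proof
  fix w :: "'a list"
  have "fa_mul (fa_const k) q w = (\<Sum>i\<in>{0}. fa_const k (take i w) * q (drop i w))"
    unfolding fa_mul_def by (rule sum.mono_neutral_right) (auto simp: fa_const_def)
  then show "fa_mul (fa_const k) q w = fa_smul k q w" by (simp add: fa_const_def fa_smul_def)
qed

lemma fa_mul_const_right: "fa_mul q (fa_const k) = fa_smul k q"
proof
  fix w :: "'a list"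
  have "fa_mul q (fa_const k) w = (\<Sum>i\<in>{length w}. q (take i w) * fa_const k (drop i w))"
    unfolding fa_mul_def by (rule sum.mono_neutral_right) (auto simp: fa_const_def)
  then show "fa_mul q (fa_const k) w = fa_smul k q w" by (simp add: fa_const_def fa_smul_def mult.commute)
qed

lemma fa_mul_one_left [simp]: "fa_mul (fa_const 1) q = q"
  by (simp add: fa_mul_const_left fa_smul_def)

lemma fa_mul_one_right [simp]: "fa_mul q (fa_const 1) = q"
  by (simp add: fa_mul_const_right fa_smul_def)

lemma fa_mul_add_left: "fa_mul (fa_add p q) r = fa_add (fa_mul p r) (fa_mul q r)"
  by (auto simp: fa_mul_def fa_add_def distrib_right sum.distrib)

lemma fa_mul_add_right: "fa_mul r (fa_add p q) = fa_add (fa_mul r p) (fa_mul r q)"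
  by (auto simp: fa_mul_def fa_add_def distrib_left sum.distrib)

lemma fa_mul_sub_left: "fa_mul (fa_sub p q) r = fa_sub (fa_mul p r) (fa_mul q r)"
  by (auto simp: fa_mul_def fa_sub_def left_diff_distrib sum_subtractf)

lemma fa_mul_sub_right: "fa_mul r (fa_sub p q) = fa_sub (fa_mul r p) (fa_mul r q)"
  by (auto simp: fa_mul_def fa_sub_def right_diff_distrib sum_subtractf)

lemma fa_mul_smul_left: "fa_mul (fa_smul k p) r = fa_smul k (fa_mul p r)"
  by (auto simp: fa_mul_def fa_smul_def sum_distrib_left mult.assoc)

lemma fa_mul_smul_right: "fa_mul r (fa_smul k p) = fa_smul k (fa_mul r p)"
  by (auto simp: fa_mul_def fa_smul_def sum_distrib_left mult.left_commute)

lemma fa_mul_sum_left: "fa_mul (\<lambda>t. \<Sum>a\<in>A. f a t) g = (\<lambda>u. \<Sum>a\<in>A. fa_mul (f a) g u)"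
  unfolding fa_mul_def by (auto simp: sum_distrib_right intro: sum.swap)

lemma fa_mul_sum_right: "fa_mul g (\<lambda>t. \<Sum>a\<in>A. f a t) = (\<lambda>u. \<Sum>a\<in>A. fa_mul g (f a) u)"
  unfolding fa_mul_def by (auto simp: sum_distrib_left intro: sum.swap)

lemma fa_mul_at_Nil [simp]: "fa_mul p q [] = p [] * q []"
  by (simp add: fa_mul_def)

lemma fa_mul_at_singleton: "fa_mul p q [a] = p [] * q [a] + p [a] * q []"
  by (simp add: fa_mul_def atMost_Suc)

lemma fa_mul_at_pair: "fa_mul p q [a,b] = p [] * q [a,b] + p [a] * q [b] + p [a,b] * q []"
  by (simp add: fa_mul_def atMost_Suc numeral_2_eq_2)

lemma fa_mul_at_triple:
  "fa_mul p q [a,b,c] = p [] * q [a,b,c] + p [a] * q [b,c] + p [a,b] * q [c] + p [a,b,c] * q []"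
  by (simp add: fa_mul_def atMost_Suc numeral_3_eq_3)

lemma fa_mul_degree_le_one_left:
  assumes "\<And>v. length v \<ge> 2 \<Longrightarrow> f v = 0"
  shows "fa_mul f h t = f [] * h t + (case t of [] \<Rightarrow> 0 | d # t' \<Rightarrow> f [d] * h t')"
proof (cases t)
  case (Cons d t')
  have "fa_mul f h t = (\<Sum>i\<in>{0,1}. f (take i t) * h (drop i t))"
    unfolding fa_mul_def by (rule sum.mono_neutral_right) (use assms in \<open>auto simp: Cons\<close>)
  then show ?thesis by (simp add: Cons)
qed simp

lemma fa_mul_var_left:
  "fa_mul (fa_var a) q t = (case t of [] \<Rightarrow> 0 | b # t' \<Rightarrow> if b = a then q t' else 0)"
  by (subst fa_mul_degree_le_one_left) (auto simp: fa_var_def split: list.split)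

lemma fa_mul_var_var: "fa_mul (fa_var a) (fa_var b) t = (if t = [a,b] then 1 else 0)"
  unfolding fa_mul_var_left by (auto simp: fa_var_def split: list.split)

lemma word_eval_append: "word_eval \<sigma> (u @ v) = fa_mul (word_eval \<sigma> u) (word_eval \<sigma> v)"
  by (induction u) (simp_all add: fa_mul_assoc)

lemma word_eval_fa_var: "word_eval fa_var v = (\<lambda>t. if t = v then 1 else 0)"
proof (induction v)
  case Nil then show ?case by (auto simp: fa_const_def)
next
  case (Cons a v)
  show ?case by (rule ext) (auto simp: fa_mul_var_left Cons split: list.split)
qed

lemma supp_fa_mul: "supp (fa_mul p q) \<subseteq> (\<lambda>(u,v). u @ v) ` (supp p \<times> supp q)"
proof
  fix w assume "w \<in> supp (fa_mul p q)"
  then have "(\<Sum>(u,v)\<in>{(u,v). u @ v = w}. p u * q v) \<noteq> 0" by (simp add: supp_def fa_mul_eq_sum_splits)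
  then obtain u v where "u @ v = w" "p u * q v \<noteq> 0"
    by (auto elim: sum.not_neutral_contains_not_neutral)
  then show "w \<in> (\<lambda>(u,v). u @ v) ` (supp p \<times> supp q)" by (auto simp: supp_def image_iff)
qed

lemma finite_supp_fa_const [simp]: "finite (supp (fa_const k))"
  by (rule finite_subset[of _ "{[]}"]) (auto simp: supp_def fa_const_def)

lemma finite_supp_fa_var [simp]: "finite (supp (fa_var a))"
  by (rule finite_subset[of _ "{[a]}"]) (auto simp: supp_def fa_var_def)

lemma finite_supp_fa_add [simp]: "finite (supp p) \<Longrightarrow> finite (supp q) \<Longrightarrow> finite (supp (fa_add p q))"
  by (rule finite_subset[of _ "supp p \<union> supp q"]) (auto simp: supp_def fa_add_def)

lemma finite_supp_fa_sub [simp]: "finite (supp p) \<Longrightarrow> finite (supp q) \<Longrightarrow> finite (supp (fa_sub p q))"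
  by (rule finite_subset[of _ "supp p \<union> supp q"]) (auto simp: supp_def fa_sub_def)

lemma finite_supp_fa_mul [simp]: "finite (supp p) \<Longrightarrow> finite (supp q) \<Longrightarrow> finite (supp (fa_mul p q))"
  by (rule finite_subset[OF supp_fa_mul]) simp

lemma fa_carrier_iff: "p \<in> fa_carrier A \<longleftrightarrow> finite (supp p) \<and> supp p \<subseteq> lists A"
  by (auto simp: fa_carrier_def supp_def)

lemma fa_carrierD: "p \<in> fa_carrier A \<Longrightarrow> p w \<noteq> 0 \<Longrightarrow> set w \<subseteq> A"
  by (auto simp: fa_carrier_def)

lemma fa_carrier_finite_supp: "p \<in> fa_carrier A \<Longrightarrow> finite (supp p)"
  by (simp add: fa_carrier_iff)

lemma fa_const_carrier [simp]: "fa_const k \<in> fa_carrier A"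
  by (auto simp: fa_carrier_iff supp_def fa_const_def)

lemma fa_var_carrier: "a \<in> A \<Longrightarrow> fa_var a \<in> fa_carrier A"
  by (auto simp: fa_carrier_iff supp_def fa_var_def split: if_splits)

lemma fa_lincomb_carrier:
  assumes "p \<in> fa_carrier A" and "q \<in> fa_carrier A"
  shows "(\<lambda>t. a * p t + b * q t) \<in> fa_carrier A"
proof -
  have "supp (\<lambda>t. a * p t + b * q t) \<subseteq> supp p \<union> supp q" by (auto simp: supp_def)
  with assms show ?thesis by (auto simp: fa_carrier_iff intro: finite_subset)
qed

lemma fa_add_carrier: "p \<in> fa_carrier A \<Longrightarrow> q \<in> fa_carrier A \<Longrightarrow> fa_add p q \<in> fa_carrier A"
  using fa_lincomb_carrier[of p A q 1 1] by (simp add: fa_add_def)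

lemma fa_sub_carrier: "p \<in> fa_carrier A \<Longrightarrow> q \<in> fa_carrier A \<Longrightarrow> fa_sub p q \<in> fa_carrier A"
  using fa_lincomb_carrier[of p A q 1 "-1"] by (simp add: fa_sub_def)

lemma fa_smul_carrier: "p \<in> fa_carrier A \<Longrightarrow> fa_smul k p \<in> fa_carrier A"
  using fa_lincomb_carrier[of p A p k 0] by (simp add: fa_smul_def)

lemma fa_mul_carrier: "p \<in> fa_carrier A \<Longrightarrow> q \<in> fa_carrier A \<Longrightarrow> fa_mul p q \<in> fa_carrier A"
  using supp_fa_mul[of p q] by (fastforce simp: fa_carrier_iff intro: finite_subset)

lemma fa_sum_carrier:
  "finite S \<Longrightarrow> (\<And>a. a \<in> S \<Longrightarrow> f a \<in> fa_carrier A) \<Longrightarrow> (\<lambda>t. \<Sum>a\<in>S. f a t) \<in> fa_carrier A"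
proof (induction S rule: finite_induct)
  case empty
  then show ?case using fa_const_carrier[of 0 A] by (simp add: fa_const_def)
next
  case (insert x F)
  then show ?case using fa_lincomb_carrier[of "f x" A "\<lambda>t. \<Sum>a\<in>F. f a t" 1 1] by simp
qed

lemma fa_carrier_empty: "p \<in> fa_carrier {} \<Longrightarrow> p = fa_const (p [])"
  by (rule ext) (auto simp: fa_carrier_def fa_const_def)

lemma word_eval_carrier:
  "set v \<subseteq> A \<Longrightarrow> (\<And>a. a \<in> A \<Longrightarrow> \<sigma> a \<in> fa_carrier B) \<Longrightarrow> word_eval \<sigma> v \<in> fa_carrier B"
  by (induction v) (auto intro: fa_mul_carrier)

lemma word_eval_cong:
  "set v \<subseteq> A \<Longrightarrow> (\<And>a. a \<in> A \<Longrightarrow> \<sigma> a = \<tau> a) \<Longrightarrow> word_eval \<sigma> v = word_eval \<tau> v"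
  by (induction v) auto

lemma fa_eval_supp: "fa_eval \<sigma> p = (\<lambda>u. \<Sum>v\<in>supp p. p v * word_eval \<sigma> v u)"
  by (simp add: fa_eval_def supp_def)

lemma fa_eval_superset:
  "finite S \<Longrightarrow> supp p \<subseteq> S \<Longrightarrow> fa_eval \<sigma> p = (\<lambda>u. \<Sum>v\<in>S. p v * word_eval \<sigma> v u)"
  unfolding fa_eval_supp by (rule ext, rule sum.mono_neutral_left) (auto simp: supp_def)

lemma fa_eval_eq_sum_smul: "fa_eval \<sigma> p = (\<lambda>u. \<Sum>v\<in>supp p. fa_smul (p v) (word_eval \<sigma> v) u)"
  by (simp add: fa_eval_supp fa_smul_def)

lemma fa_eval_carrier:
  assumes "p \<in> fa_carrier A" and "\<And>a. a \<in> A \<Longrightarrow> \<sigma> a \<in> fa_carrier B"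
  shows "fa_eval \<sigma> p \<in> fa_carrier B"
  unfolding fa_eval_eq_sum_smul
  using assms by (intro fa_sum_carrier fa_smul_carrier word_eval_carrier) (auto simp: fa_carrier_iff)

lemma fa_eval_cong:
  assumes "p \<in> fa_carrier A" and "\<And>a. a \<in> A \<Longrightarrow> \<sigma> a = \<tau> a"
  shows "fa_eval \<sigma> p = fa_eval \<tau> p"
proof -
  have "word_eval \<sigma> v = word_eval \<tau> v" if "v \<in> supp p" for v
    using word_eval_cong[of v A \<sigma> \<tau>] that assms by (auto simp: fa_carrier_iff in_lists_conv_set)
  then show ?thesis by (simp add: fa_eval_supp)
qed

lemma fa_eval_fa_var: "finite (supp p) \<Longrightarrow> fa_eval fa_var p = p"
  by (rule ext) (auto simp: fa_eval_supp word_eval_fa_var if_distrib sum.delta supp_def cong: if_cong)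

lemma fa_eval_at_single_word:
  assumes "finite (supp F)" and "u0 \<in> supp F" and "\<And>u. u \<in> supp F \<Longrightarrow> u \<noteq> u0 \<Longrightarrow> word_eval \<sigma> u t = 0"
  shows "fa_eval \<sigma> F t = F u0 * word_eval \<sigma> u0 t"
proof -
  have "fa_eval \<sigma> F t = F u0 * word_eval \<sigma> u0 t + (\<Sum>u\<in>supp F - {u0}. F u * word_eval \<sigma> u t)"
    unfolding fa_eval_supp using assms(1,2) by (simp add: sum.remove)
  also have "(\<Sum>u\<in>supp F - {u0}. F u * word_eval \<sigma> u t) = 0"
    using assms(3) by (intro sum.neutral) auto
  finally show ?thesis by simp
qed

lemma fa_eval_lincomb:
  assumes "finite (supp p)" and "finite (supp q)"
  shows "fa_eval \<sigma> (\<lambda>t. a * p t + b * q t) = (\<lambda>u. a * fa_eval \<sigma> p u + b * fa_eval \<sigma> q u)"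
proof -
  let ?S = "supp p \<union> supp q"
  have "supp (\<lambda>t. a * p t + b * q t) \<subseteq> ?S" by (auto simp: supp_def)
  then show ?thesis
    using assms
    by (simp add: fa_eval_superset[of ?S] sum_distrib_left sum.distrib[symmetric] distrib_right mult.assoc)
qed

lemma fa_eval_add:
  "finite (supp p) \<Longrightarrow> finite (supp q) \<Longrightarrow> fa_eval \<sigma> (fa_add p q) = fa_add (fa_eval \<sigma> p) (fa_eval \<sigma> q)"
  using fa_eval_lincomb[of p q \<sigma> 1 1] by (simp add: fa_add_def)

lemma fa_eval_sub:
  "finite (supp p) \<Longrightarrow> finite (supp q) \<Longrightarrow> fa_eval \<sigma> (fa_sub p q) = fa_sub (fa_eval \<sigma> p) (fa_eval \<sigma> q)"
  using fa_eval_lincomb[of p q \<sigma> 1 "-1"] by (simp add: fa_sub_def)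

lemma fa_eval_const [simp]: "fa_eval \<sigma> (fa_const k) = fa_const k"
  by (subst fa_eval_superset[of "{[]}"]) (auto simp: supp_def fa_const_def)

lemma fa_eval_var [simp]: "fa_eval \<sigma> (fa_var a) = \<sigma> a"
  by (subst fa_eval_superset[of "{[a]}"]) (auto simp: supp_def fa_var_def)

lemma fa_eval_mul:
  assumes fp: "finite (supp p)" and fq: "finite (supp q)"
  shows "fa_eval \<sigma> (fa_mul p q) = fa_mul (fa_eval \<sigma> p) (fa_eval \<sigma> q)"
proof
  fix u0
  let ?f = "\<lambda>(u,v). u @ v" and ?P = "supp p \<times> supp q"
  have fP: "finite ?P" using fp fq by simp
  have coeff: "fa_mul p q t = (\<Sum>(u,v)\<in>{x\<in>?P. ?f x = t}. p u * q v)" for t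
    unfolding fa_mul_eq_sum_splits
    by (rule sum.mono_neutral_right) (auto simp: finite_append_splits supp_def)
  have "fa_eval \<sigma> (fa_mul p q) u0 = (\<Sum>t\<in>?f ` ?P. fa_mul p q t * word_eval \<sigma> t u0)"
    using supp_fa_mul[of p q] fP by (subst fa_eval_superset[of "?f ` ?P"]) auto
  also have "\<dots> = (\<Sum>t\<in>?f ` ?P. \<Sum>(a,b)\<in>{x\<in>?P. ?f x = t}. p a * q b * word_eval \<sigma> (a @ b) u0)"
    unfolding coeff sum_distrib_right by (intro sum.cong refl) auto
  also have "\<dots> = (\<Sum>(a,b)\<in>?P. p a * q b * word_eval \<sigma> (a @ b) u0)"
    using fP by (rule sum.image_gen[symmetric])
  also have "\<dots> = (\<Sum>a\<in>supp p. \<Sum>b\<in>supp q. p a * q b * fa_mul (word_eval \<sigma> a) (word_eval \<sigma> b) u0)"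
    by (simp add: sum.cartesian_product word_eval_append)
  also have "\<dots> = fa_mul (fa_eval \<sigma> p) (fa_eval \<sigma> q) u0"
    unfolding fa_eval_eq_sum_smul fa_mul_sum_left fa_mul_sum_right fa_mul_smul_left fa_mul_smul_right
    by (simp add: fa_smul_def sum_distrib_left mult.assoc mult.left_commute)
  finally show "fa_eval \<sigma> (fa_mul p q) u0 = fa_mul (fa_eval \<sigma> p) (fa_eval \<sigma> q) u0" .
qed

definition subst_hom :: "'x set \<Rightarrow> ('x \<Rightarrow> ('x list \<Rightarrow> 'k::field)) \<Rightarrow> ('x list \<Rightarrow> 'k) \<Rightarrow> ('x list \<Rightarrow> 'k)" where
  "subst_hom A \<sigma> = restrict (fa_eval \<sigma>) (fa_carrier A)"

lemma subst_hom_fa_hom: "(\<And>a. a \<in> A \<Longrightarrow> \<sigma> a \<in> fa_carrier B) \<Longrightarrow> subst_hom A \<sigma> \<in> fa_hom A B"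
  unfolding fa_hom_def subst_hom_def
  by (auto simp: fa_eval_carrier fa_add_carrier fa_mul_carrier fa_carrier_finite_supp fa_eval_add fa_eval_mul)

lemma fa_homD:
  assumes "h \<in> fa_hom A B"
  shows "h \<in> extensional (fa_carrier A)"
    and "\<And>p. p \<in> fa_carrier A \<Longrightarrow> h p \<in> fa_carrier B"
    and "\<And>p q. p \<in> fa_carrier A \<Longrightarrow> q \<in> fa_carrier A \<Longrightarrow> h (fa_add p q) = fa_add (h p) (h q)"
    and "\<And>p q. p \<in> fa_carrier A \<Longrightarrow> q \<in> fa_carrier A \<Longrightarrow> h (fa_mul p q) = fa_mul (h p) (h q)"
    and "\<And>c. h (fa_const c) = fa_const c"
  using assms unfolding fa_hom_def by auto

lemma fa_hom_sum:
  assumes h: "h \<in> fa_hom A B" and "finite S" and "\<And>v. v \<in> S \<Longrightarrow> f v \<in> fa_carrier A"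
  shows "h (\<lambda>t. \<Sum>v\<in>S. f v t) = (\<lambda>t. \<Sum>v\<in>S. h (f v) t)"
  using assms(2,3)
proof (induction S rule: finite_induct)
  case empty
  then show ?case using fa_homD(5)[OF h, of 0] by (simp add: fa_const_def)
next
  case (insert x F)
  have "(\<lambda>t. \<Sum>v\<in>insert x F. f v t) = fa_add (f x) (\<lambda>t. \<Sum>v\<in>F. f v t)"
    using insert by (simp add: fa_add_def)
  moreover have "(\<lambda>t. \<Sum>v\<in>F. f v t) \<in> fa_carrier A" using insert by (intro fa_sum_carrier) auto
  ultimately show ?case using insert fa_homD(3)[OF h, of "f x"] by (simp add: fa_add_def)
qed

lemma fa_hom_smul: "h \<in> fa_hom A B \<Longrightarrow> p \<in> fa_carrier A \<Longrightarrow> h (fa_smul k p) = fa_smul k (h p)"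
  using fa_homD(4)[of h A B "fa_const k" p] fa_homD(5)[of h A B k] by (simp add: fa_mul_const_left)

lemma fa_hom_word_eval:
  "h \<in> fa_hom A B \<Longrightarrow> set v \<subseteq> A \<Longrightarrow> h (word_eval fa_var v) = word_eval (\<lambda>z. h (fa_var z)) v"
proof (induction v)
  case Nil
  then show ?case using fa_homD(5)[of h A B 1] by simp
next
  case (Cons a v)
  have "word_eval fa_var v \<in> fa_carrier A"
    using Cons by (intro word_eval_carrier[where A=A]) (auto intro: fa_var_carrier)
  then show ?case using Cons fa_homD(4)[OF Cons(2), of "fa_var a" "word_eval fa_var v"] by (simp add: fa_var_carrier)
qed

lemma fa_hom_eq_fa_eval:
  assumes h: "h \<in> fa_hom A B" and p: "p \<in> fa_carrier A"
  shows "h p = fa_eval (\<lambda>z. h (fa_var z)) p"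
proof -
  have fp: "finite (supp p)" and ps: "\<And>v. v \<in> supp p \<Longrightarrow> set v \<subseteq> A"
    using p by (auto simp: fa_carrier_iff)
  have "h p = h (fa_eval fa_var p)" by (simp add: fa_eval_fa_var[OF fp])
  also have "\<dots> = (\<lambda>u. \<Sum>v\<in>supp p. h (fa_smul (p v) (word_eval fa_var v)) u)"
    unfolding fa_eval_eq_sum_smul using ps
    by (intro fa_hom_sum[OF h fp] fa_smul_carrier word_eval_carrier[where A=A]) (auto intro: fa_var_carrier)
  also have "\<dots> = fa_eval (\<lambda>z. h (fa_var z)) p"
    unfolding fa_eval_eq_sum_smul using ps
    by (intro ext sum.cong refl)
      (simp add: fa_hom_smul[OF h] word_eval_carrier[where A=A] fa_var_carrier fa_hom_word_eval[OF h])
  finally show ?thesis .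
qed

lemma fa_comp_fa_hom: "f \<in> fa_hom A B \<Longrightarrow> g \<in> fa_hom B C \<Longrightarrow> fa_comp A g f \<in> fa_hom A C"
  unfolding fa_comp_def fa_hom_def by (auto simp: fa_add_carrier fa_mul_carrier Pi_iff)

section \<open>The main function of a generator-fixing automorphism\<close>

locale var_fixing_auto =
  fixes \<Phi> :: "'x set \<Rightarrow> 'x set \<Rightarrow> (('x list \<Rightarrow> 'k::field) \<Rightarrow> ('x list \<Rightarrow> 'k)) \<Rightarrow> (('x list \<Rightarrow> 'k) \<Rightarrow> ('x list \<Rightarrow> 'k))"
    and x0 :: 'x
  assumes auto: "obj_fixing_auto \<Phi>"
    and fixvars: "\<forall>A. finite A \<longrightarrow> (\<forall>x\<in>A. main_fun \<Phi> x0 A (fa_var x) = fa_var x)"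
begin

abbreviation s where "s A a \<equiv> main_fun \<Phi> x0 A a"

lemma Phi_bij: "finite A \<Longrightarrow> finite B \<Longrightarrow> bij_betw (\<Phi> A B) (fa_hom A B) (fa_hom A B)"
  using auto by (simp add: obj_fixing_auto_def)

lemma Phi_comp:
  "finite A \<Longrightarrow> finite B \<Longrightarrow> finite C \<Longrightarrow> f \<in> fa_hom A B \<Longrightarrow> g \<in> fa_hom B C \<Longrightarrow>
     \<Phi> A C (fa_comp A g f) = fa_comp A (\<Phi> B C g) (\<Phi> A B f)"
  using auto by (simp add: obj_fixing_auto_def)

lemma Phi_fa_hom: "finite A \<Longrightarrow> finite B \<Longrightarrow> \<mu> \<in> fa_hom A B \<Longrightarrow> \<Phi> A B \<mu> \<in> fa_hom A B"
  using Phi_bij[of A B] by (auto simp: bij_betw_def)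

lemma s_var: "finite B \<Longrightarrow> a \<in> B \<Longrightarrow> s B (fa_var a) = fa_var a"
  using fixvars by auto

lemma fa_var_x0_carrier: "fa_var x0 \<in> fa_carrier {x0}"
  by (simp add: fa_var_carrier)

lemma alpha_fa_hom: "a \<in> fa_carrier A \<Longrightarrow> alpha x0 a \<in> fa_hom {x0} A"
  unfolding alpha_def subst_hom_def[symmetric] by (rule subst_hom_fa_hom) simp

lemma alpha_at_var: "alpha x0 a (fa_var x0) = a"
  by (simp add: alpha_def fa_var_x0_carrier)

lemma s_carrier: "finite A \<Longrightarrow> a \<in> fa_carrier A \<Longrightarrow> s A a \<in> fa_carrier A"
  unfolding main_fun_def using fa_homD(2)[OF Phi_fa_hom[OF _ _ alpha_fa_hom] fa_var_x0_carrier] by simp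

lemma fa_hom_F1_eq_alpha:
  assumes h: "h \<in> fa_hom {x0} A"
  shows "h = alpha x0 (h (fa_var x0))"
proof
  fix p
  show "h p = alpha x0 (h (fa_var x0)) p"
  proof (cases "p \<in> fa_carrier {x0}")
    case True
    have "h p = fa_eval (\<lambda>z. h (fa_var z)) p" by (rule fa_hom_eq_fa_eval[OF h True])
    also have "\<dots> = fa_eval (\<lambda>_. h (fa_var x0)) p" by (rule fa_eval_cong[OF True]) simp
    finally show ?thesis using True by (simp add: alpha_def)
  next
    case False
    then show ?thesis using fa_homD(1)[OF h] by (simp add: alpha_def extensional_def)
  qed
qed

lemma Phi_alpha: "finite A \<Longrightarrow> a \<in> fa_carrier A \<Longrightarrow> \<Phi> {x0} A (alpha x0 a) = alpha x0 (s A a)"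
  unfolding main_fun_def by (rule fa_hom_F1_eq_alpha[OF Phi_fa_hom[OF _ _ alpha_fa_hom]]) auto

lemma fa_comp_alpha:
  "\<mu> \<in> fa_hom A B \<Longrightarrow> a \<in> fa_carrier A \<Longrightarrow> fa_comp {x0} \<mu> (alpha x0 a) = alpha x0 (\<mu> a)"
  using fa_hom_F1_eq_alpha[OF fa_comp_fa_hom[OF alpha_fa_hom]]
  by (simp add: fa_comp_def fa_var_x0_carrier alpha_at_var)

text \<open>The relation \<open>\<Phi>(\<mu>) = s\<^sub>B \<circ> \<mu> \<circ> s\<^sub>A\<^sup>-\<^sup>1\<close> of the paper.\<close>

lemma s_natural:
  assumes A: "finite A" and B: "finite B" and mu: "\<mu> \<in> fa_hom A B" and a: "a \<in> fa_carrier A"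
  shows "s B (\<mu> a) = \<Phi> A B \<mu> (s A a)"
proof -
  have "\<Phi> {x0} B (alpha x0 (\<mu> a)) = \<Phi> {x0} B (fa_comp {x0} \<mu> (alpha x0 a))"
    by (simp add: fa_comp_alpha[OF mu a])
  also have "\<dots> = fa_comp {x0} (\<Phi> A B \<mu>) (alpha x0 (s A a))"
    by (simp add: Phi_comp[OF _ A B alpha_fa_hom[OF a] mu] Phi_alpha[OF A a])
  finally show ?thesis
    by (simp add: main_fun_def fa_comp_def fa_var_x0_carrier alpha_at_var)
qed

lemma s_fa_hom:
  assumes A: "finite A" and B: "finite B" and mu: "\<mu> \<in> fa_hom A B" and p: "p \<in> fa_carrier A"
  shows "s B (\<mu> p) = fa_eval (\<lambda>z. s B (\<mu> (fa_var z))) (s A p)"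
proof -
  have sp: "s A p \<in> fa_carrier A" by (rule s_carrier[OF A p])
  have "s B (\<mu> p) = fa_eval (\<lambda>z. \<Phi> A B \<mu> (fa_var z)) (s A p)"
    by (simp add: s_natural[OF A B mu p] fa_hom_eq_fa_eval[OF Phi_fa_hom[OF A B mu] sp])
  also have "\<dots> = fa_eval (\<lambda>z. s B (\<mu> (fa_var z))) (s A p)"
    using s_natural[OF A B mu] s_var[OF A] by (intro fa_eval_cong[OF sp]) (simp add: fa_var_carrier)
  finally show ?thesis .
qed

lemma s_fa_eval:
  assumes A: "finite A" and B: "finite B" and \<sigma>: "\<And>a. a \<in> A \<Longrightarrow> \<sigma> a \<in> fa_carrier B"
    and p: "p \<in> fa_carrier A"
  shows "s B (fa_eval \<sigma> p) = fa_eval (\<lambda>z. s B (\<sigma> z)) (s A p)"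
proof -
  have "s B (subst_hom A \<sigma> p) = fa_eval (\<lambda>z. s B (subst_hom A \<sigma> (fa_var z))) (s A p)"
    by (rule s_fa_hom[OF A B subst_hom_fa_hom[OF \<sigma>] p])
  also have "\<dots> = fa_eval (\<lambda>z. s B (\<sigma> z)) (s A p)"
    by (rule fa_eval_cong[OF s_carrier[OF A p]]) (simp add: subst_hom_def fa_var_carrier)
  finally show ?thesis using p by (simp add: subst_hom_def)
qed

lemma s_inj:
  assumes A: "finite A" and a: "a \<in> fa_carrier A" and b: "b \<in> fa_carrier A" and eq: "s A a = s A b"
  shows "a = b"
proof -
  have "\<Phi> {x0} A (alpha x0 a) = \<Phi> {x0} A (alpha x0 b)"
    using Phi_alpha[OF A a] Phi_alpha[OF A b] eq by simp
  then have "alpha x0 a = alpha x0 b"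
    using Phi_bij[of "{x0}" A] A alpha_fa_hom[OF a] alpha_fa_hom[OF b] by (auto simp: bij_betw_def inj_on_def)
  then show ?thesis using alpha_at_var[of a] alpha_at_var[of b] by metis
qed

lemma s_surj:
  assumes A: "finite A" and b: "b \<in> fa_carrier A"
  shows "\<exists>a\<in>fa_carrier A. s A a = b"
proof -
  obtain h where h: "h \<in> fa_hom {x0} A" and eq: "\<Phi> {x0} A h = alpha x0 b"
    using Phi_bij[of "{x0}" A] A alpha_fa_hom[OF b] by (force simp: bij_betw_def)
  have "h (fa_var x0) \<in> fa_carrier A" using fa_homD(2)[OF h fa_var_x0_carrier] .
  moreover have "s A (h (fa_var x0)) = b"
    using fa_hom_F1_eq_alpha[OF h] eq alpha_at_var[of b] by (simp add: main_fun_def)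
  ultimately show ?thesis by blast
qed

definition s_scalar :: "'k \<Rightarrow> 'k" where
  "s_scalar c = s {} (fa_const c) []"

text \<open>Constants are fixed by every morphism, so \<open>s\<close> acts on them as on the free algebra on no
  generators, which consists of the constants.\<close>

lemma s_const:
  assumes A: "finite A"
  shows "s A (fa_const c) = fa_const (s_scalar c)"
proof -
  let ?\<mu> = "subst_hom {} (\<lambda>_. fa_const 0) :: ('x list \<Rightarrow> 'k) \<Rightarrow> _"
  have mu: "?\<mu> \<in> fa_hom {} A" by (rule subst_hom_fa_hom) simp
  have "s {} (fa_const c) = fa_const (s_scalar c)"
    using fa_carrier_empty[OF s_carrier[of "{}" "fa_const c"]] by (simp add: s_scalar_def)
  then show ?thesis
    using s_fa_hom[OF _ A mu, of "fa_const c"] by (simp add: subst_hom_def)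
qed

lemma s_scalar_bij: "bij s_scalar"
proof (rule bijI)
  show "inj s_scalar"
  proof
    fix c d assume "s_scalar c = s_scalar d"
    then have "s {} (fa_const c) = s {} (fa_const d)" by (simp add: s_const)
    then have "fa_const c = (fa_const d :: 'x list \<Rightarrow> 'k)" by (rule s_inj[rotated 3]) auto
    then show "c = d" by (metis fa_const_def)
  qed
  show "surj s_scalar"
    unfolding surj_def
  proof
    fix k :: 'k
    obtain a where a: "a \<in> fa_carrier {}" and eq: "s {} a = fa_const k"
      using s_surj[of "{}" "fa_const k"] by auto
    have "s_scalar (a []) = k" using eq fa_carrier_empty[OF a] by (simp add: s_scalar_def fa_const_def)
    then show "\<exists>c. k = s_scalar c" by metis
  qed
qed

lemma s_scalar_one_neq_zero: "s_scalar 1 \<noteq> s_scalar 0"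
  using s_scalar_bij by (metis bij_def inj_eq one_neq_zero)

end

section \<open>Degree bounds from substitution identities\<close>

text \<open>Words over \<open>{a, b}\<close> are compared first by the number of letters \<open>a\<close>, then by length, then
  lexicographically with \<open>a < b\<close> (read off from \<open>bin_code b\<close>). This order is compatible with
  concatenation, so the top word of a product is the concatenation of the top words of the factors.\<close>

fun bin_code :: "'x \<Rightarrow> 'x list \<Rightarrow> nat" where
  "bin_code b [] = 0"
| "bin_code b (c # u) = (if c = b then 2 ^ length u else 0) + bin_code b u"

definition word_key :: "'x \<Rightarrow> 'x \<Rightarrow> 'x list \<Rightarrow> nat \<times> nat \<times> nat" where
  "word_key a b u = (count_list u a, length u, bin_code b u)"

definition key_concat :: "nat \<times> nat \<times> nat \<Rightarrow> nat \<times> nat \<times> nat \<Rightarrow> nat \<times> nat \<times> nat" where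
  "key_concat k1 k2 = (case k1 of (c1,l1,b1) \<Rightarrow> case k2 of (c2,l2,b2) \<Rightarrow> (c1 + c2, l1 + l2, b1 * 2 ^ l2 + b2))"

lemma bin_code_append: "bin_code b (u @ v) = bin_code b u * 2 ^ length v + bin_code b v"
  by (induction u) (auto simp: power_add algebra_simps)

lemma bin_code_less: "bin_code b u < 2 ^ length u"
  by (induction u) auto

lemma word_key_append: "word_key a b (u @ v) = key_concat (word_key a b u) (word_key a b v)"
  by (simp add: word_key_def key_concat_def bin_code_append)

lemma word_key_le_count: "word_key a b v \<le> word_key a b w \<Longrightarrow> count_list v a \<le> count_list w a"
  by (auto simp: word_key_def)

lemma bin_code_inj:
  "u \<in> lists {a,b} \<Longrightarrow> v \<in> lists {a,b} \<Longrightarrow> length u = length v \<Longrightarrow> bin_code b u = bin_code b v \<Longrightarrow> u = v"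
proof (induction u arbitrary: v)
  case (Cons c u)
  then obtain d v' where v: "v = d # v'" and l: "length u = length v'" by (cases v) auto
  have eq: "(if c = b then 2 ^ length u else 0) + bin_code b u = (if d = b then 2 ^ length u else 0) + bin_code b v'"
    using Cons.prems(4) v l by simp
  have "bin_code b u < 2 ^ length u" "bin_code b v' < 2 ^ length u"
    using bin_code_less[of b u] bin_code_less[of b v'] l by auto
  then have "(c = b) = (d = b)" and "bin_code b u = bin_code b v'"
    using eq by (auto split: if_splits)
  then show ?case using Cons v l by auto
qed simp

lemma word_key_inj:
  "u \<in> lists {a,b} \<Longrightarrow> v \<in> lists {a,b} \<Longrightarrow> word_key a b u = word_key a b v \<Longrightarrow> u = v"
  by (auto simp: word_key_def intro: bin_code_inj)

lemma key_concat_less_left: "k1 < k1' \<Longrightarrow> key_concat k1 k2 < key_concat k1' k2"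
  by (cases k1; cases k1'; cases k2) (auto simp: key_concat_def)

lemma key_concat_less_right: "k2 < k2' \<Longrightarrow> key_concat k1 k2 < key_concat k1 k2'"
  by (cases k1; cases k2; cases k2') (auto simp: key_concat_def)

lemma key_concat_mono:
  assumes "k1 \<le> k1'" and "k2 \<le> k2'"
  shows "key_concat k1 k2 \<le> key_concat k1' k2'"
proof -
  have "key_concat k1 k2 \<le> key_concat k1' k2"
    using key_concat_less_left[of k1 k1' k2] assms(1) by (auto simp: order_le_less)
  also have "\<dots> \<le> key_concat k1' k2'"
    using key_concat_less_right[of k2 k2' k1'] assms(2) by (auto simp: order_le_less)
  finally show ?thesis .
qed

definition key_bounded :: "'x \<Rightarrow> 'x \<Rightarrow> 'x list \<Rightarrow> ('x list \<Rightarrow> 'k::zero) \<Rightarrow> bool" where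
  "key_bounded a b m p \<longleftrightarrow> (\<forall>v. p v \<noteq> 0 \<longrightarrow> word_key a b v \<le> word_key a b m)"

lemma key_boundedD: "key_bounded a b m p \<Longrightarrow> p v \<noteq> 0 \<Longrightarrow> word_key a b v \<le> word_key a b m"
  by (simp add: key_bounded_def)

lemma key_bounded_fa_mul:
  assumes "key_bounded a b m1 p" and "key_bounded a b m2 q"
  shows "key_bounded a b (m1 @ m2) (fa_mul p q)"
  unfolding key_bounded_def
proof (intro allI impI)
  fix w assume "fa_mul p q w \<noteq> 0"
  then obtain u v where uv: "u \<in> supp p" "v \<in> supp q" "w = u @ v"
    using supp_fa_mul[of p q] by (auto simp: supp_def)
  then show "word_key a b w \<le> word_key a b (m1 @ m2)"
    using assms by (auto simp: key_bounded_def supp_def word_key_append intro: key_concat_mono)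
qed

lemma fa_mul_at_top_words:
  assumes p: "key_bounded a b m1 p" and q: "key_bounded a b m2 q"
    and "supp p \<subseteq> lists {a,b}" "supp q \<subseteq> lists {a,b}" "m1 \<in> lists {a,b}" "m2 \<in> lists {a,b}"
  shows "fa_mul p q (m1 @ m2) = p m1 * q m2"
proof -
  have "p u * q v = 0" if uv: "u @ v = m1 @ m2" and ne: "(u,v) \<noteq> (m1,m2)" for u v
  proof (rule ccontr)
    let ?k = "word_key a b"
    assume "p u * q v \<noteq> 0"
    then have ku: "?k u \<le> ?k m1" and kv: "?k v \<le> ?k m2" and "u \<in> lists {a,b}" "v \<in> lists {a,b}"
      using assms by (auto simp: key_bounded_def supp_def)
    then have "?k u \<noteq> ?k m1 \<or> ?k v \<noteq> ?k m2"
      using ne word_key_inj[of u a b m1] word_key_inj[of v a b m2] assms(5,6) by blast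
    then have "key_concat (?k u) (?k v) < key_concat (?k m1) (?k m2)"
    proof
      assume "?k u \<noteq> ?k m1"
      then have "key_concat (?k u) (?k v) < key_concat (?k m1) (?k v)"
        using ku by (simp add: key_concat_less_left)
      also have "\<dots> \<le> key_concat (?k m1) (?k m2)" using kv by (simp add: key_concat_mono)
      finally show ?thesis .
    next
      assume "?k v \<noteq> ?k m2"
      then have "key_concat (?k u) (?k v) < key_concat (?k u) (?k m2)"
        using kv by (simp add: key_concat_less_right)
      also have "\<dots> \<le> key_concat (?k m1) (?k m2)" using ku by (simp add: key_concat_mono)
      finally show ?thesis .
    qed
    with uv show False by (simp flip: word_key_append)
  qed
  then have "(case x of (u,v) \<Rightarrow> p u * q v) = 0" if "x \<in> {(u,v). u @ v = m1 @ m2} - {(m1,m2)}" for x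
    using that by (cases x) simp
  then have "fa_mul p q (m1 @ m2) = (\<Sum>(u,v)\<in>{(m1,m2)}. p u * q v)"
    unfolding fa_mul_eq_sum_splits by (intro sum.mono_neutral_right finite_append_splits) auto
  then show ?thesis by simp
qed

lemma supp_fa_mul_lists:
  assumes "supp p \<subseteq> lists A" and "supp q \<subseteq> lists A"
  shows "supp (fa_mul p q) \<subseteq> lists A"
proof
  fix w assume "w \<in> supp (fa_mul p q)"
  then have "w \<in> (\<lambda>(u,v). u @ v) ` (supp p \<times> supp q)" using supp_fa_mul by blast
  then obtain u v where "u \<in> supp p" "v \<in> supp q" "w = u @ v" by auto
  with assms show "w \<in> lists A" by auto
qed

definition word_subst :: "'x \<Rightarrow> 'x list \<Rightarrow> 'x list \<Rightarrow> 'x list" where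
  "word_subst a m u = concat (map (\<lambda>c. if c = a then m else [c]) u)"

lemma word_subst_Nil [simp]: "word_subst a m [] = []"
  by (simp add: word_subst_def)

lemma word_subst_Cons [simp]: "word_subst a m (c # u) = (if c = a then m else [c]) @ word_subst a m u"
  by (simp add: word_subst_def)

lemma count_list_word_subst:
  "a \<noteq> b \<Longrightarrow> set u \<subseteq> {a,b} \<Longrightarrow> count_list (word_subst a m u) a = count_list u a * count_list m a"
  by (induction u) auto

lemma word_subst_lists: "m \<in> lists {a,b} \<Longrightarrow> u \<in> lists {a,b} \<Longrightarrow> word_subst a m u \<in> lists {a,b}"
  by (induction u) auto

lemma in_set_word_subst: "a \<in> set m \<Longrightarrow> a \<in> set (word_subst a m u) \<longleftrightarrow> a \<in> set u"
  by (induction u) auto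

definition leading_run :: "'x \<Rightarrow> 'x list \<Rightarrow> nat" where
  "leading_run b t = length (takeWhile (\<lambda>c. c = b) t)"

lemma leading_run_word_subst:
  assumes "a \<noteq> b" and "a \<in> set m"
  shows "set u \<subseteq> {a,b} \<Longrightarrow> a \<in> set u \<Longrightarrow> leading_run b (word_subst a m u) = leading_run b u + leading_run b m"
proof (induction u)
  case (Cons c u)
  then show ?case
    using assms by (cases "c = a") (auto simp: leading_run_def)
qed simp

text \<open>If \<open>m\<close> contains \<open>a\<close>, two words over \<open>{a, b}\<close> that first differ by \<open>b\<close> against \<open>a\<close>
  keep a different number of leading \<open>b\<close>s after substituting \<open>m\<close> for \<open>a\<close>.\<close>

lemma word_subst_inj:
  assumes ab: "a \<noteq> b" and am: "a \<in> set m"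
  shows "set u \<subseteq> {a,b} \<Longrightarrow> set v \<subseteq> {a,b} \<Longrightarrow> word_subst a m u = word_subst a m v \<Longrightarrow> u = v"
proof (induction u arbitrary: v)
  case Nil
  then show ?case using am by (cases v) (auto split: if_splits)
next
  case (Cons c u)
  have differ: False
    if "c = b" "d = a" "set (c # u) \<subseteq> {a,b}" "set (d # v') \<subseteq> {a,b}"
      and eq: "word_subst a m (c # u) = word_subst a m (d # v')" for c d u v'
  proof -
    have "a \<in> set (word_subst a m (c # u))" using that am by simp
    then have "a \<in> set (c # u)" using in_set_word_subst[OF am] by blast
    then have "leading_run b (word_subst a m (c # u)) = leading_run b (c # u) + leading_run b m"
      using leading_run_word_subst[OF ab am that(3)] by blast
    moreover have "leading_run b (word_subst a m (d # v')) = leading_run b (d # v') + leading_run b m"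
      using leading_run_word_subst[OF ab am that(4)] that(2) by simp
    moreover have "leading_run b (c # u) \<ge> 1" "leading_run b (d # v') = 0"
      using that ab by (auto simp: leading_run_def)
    ultimately show False using eq by simp
  qed
  show ?case
  proof (cases v)
    case Nil
    then show ?thesis using Cons.prems am by (auto split: if_splits)
  next
    case (Cons d v')
    then show ?thesis
      using Cons.IH[of v'] Cons.prems differ[of c d u v'] differ[of d c v' u] by (cases "c = d") auto
  qed
qed

lemma word_eval_subst_top:
  fixes P :: "'x list \<Rightarrow> 'k::field" and a b :: 'x
  defines "\<sigma> \<equiv> \<lambda>c. if c = a then P else fa_var c"
  assumes ab: "a \<noteq> b" and dm: "key_bounded a b m P" and sP: "supp P \<subseteq> lists {a,b}"
    and mW: "m \<in> lists {a,b}"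
  shows "u \<in> lists {a,b} \<Longrightarrow> key_bounded a b (word_subst a m u) (word_eval \<sigma> u)
     \<and> word_eval \<sigma> u (word_subst a m u) = P m ^ count_list u a
     \<and> supp (word_eval \<sigma> u) \<subseteq> lists {a,b}"
proof (induction u)
  case Nil
  have "supp (fa_const 1 :: 'x list \<Rightarrow> 'k) \<subseteq> lists {a,b}" by (auto simp: supp_def fa_const_def)
  then show ?case by (auto simp: key_bounded_def fa_const_def)
next
  case (Cons c u)
  then have uW: "u \<in> lists {a,b}" and c: "c = a \<or> c = b" by auto
  note IH = Cons.IH[OF uW]
  have subW: "word_subst a m u \<in> lists {a,b}" by (rule word_subst_lists[OF mW uW])
  have dv: "key_bounded a b [c] (fa_var c :: 'x list \<Rightarrow> 'k)"
    by (auto simp: key_bounded_def fa_var_def)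
  have sv: "supp (fa_var c :: 'x list \<Rightarrow> 'k) \<subseteq> lists {a,b}"
    using c by (auto simp: supp_def fa_var_def)
  show ?case
  proof (cases "c = a")
    case True
    then show ?thesis
      using key_bounded_fa_mul[OF dm] fa_mul_at_top_words[OF dm _ sP _ mW subW] supp_fa_mul_lists[OF sP] IH
      by (simp add: \<sigma>_def)
  next
    case False
    then show ?thesis
      using key_bounded_fa_mul[OF dv] fa_mul_at_top_words[OF dv _ sv _ _ subW] supp_fa_mul_lists[OF sv] IH c
      by (simp add: \<sigma>_def fa_var_def)
  qed
qed

lemma exists_top_word:
  assumes "finite (supp P)" and "supp P \<subseteq> lists {a,b}"
  obtains m where "m \<in> lists {a,b}" and "key_bounded a b m P" and "m \<in> supp P \<or> m = []"
proof (cases "supp P = {}")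
  case True
  then show ?thesis using that[of "[]"] by (auto simp: key_bounded_def supp_def)
next
  case False
  then obtain m where "m \<in> supp P" "word_key a b m = Max (word_key a b ` supp P)"
    using Max_in[of "word_key a b ` supp P"] assms(1) by (metis finite_imageI image_iff image_is_empty)
  then show ?thesis using that[of m] assms by (auto simp: key_bounded_def supp_def)
qed

lemma fa_eval_subst_at_top:
  fixes F P :: "'x list \<Rightarrow> 'k::field" and a b :: 'x
  defines "\<sigma> \<equiv> \<lambda>c. if c = a then P else fa_var c"
  assumes ab: "a \<noteq> b" and F: "F \<in> fa_carrier {a,b}" and "F \<noteq> (\<lambda>_. 0)"
    and P: "supp P \<subseteq> lists {a,b}" and m: "m \<in> lists {a,b}" "key_bounded a b m P" and am: "a \<in> set m"
  obtains us where "us \<in> supp F"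
    and "\<And>u. u \<in> supp F \<Longrightarrow> word_key a b (word_subst a m u) \<le> word_key a b (word_subst a m us)"
    and "fa_eval \<sigma> F (word_subst a m us) = F us * P m ^ count_list us a"
proof -
  let ?k = "\<lambda>u. word_key a b (word_subst a m u)"
  have sF: "supp F \<subseteq> lists {a,b}" and fF: "finite (supp F)" using F by (auto simp: fa_carrier_iff)
  have "supp F \<noteq> {}" using \<open>F \<noteq> (\<lambda>_. 0)\<close> by (auto simp: supp_def)
  then have "Max (?k ` supp F) \<in> ?k ` supp F" using fF by (intro Max_in) auto
  then obtain us where us: "us \<in> supp F" "?k us = Max (?k ` supp F)" by auto
  have kmax: "?k u \<le> ?k us" if "u \<in> supp F" for u using that fF us(2) by simp
  note top = word_eval_subst_top[OF ab m(2) P m(1), folded \<sigma>_def]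
  have others: "word_eval \<sigma> u (word_subst a m us) = 0" if u: "u \<in> supp F" "u \<noteq> us" for u
  proof (rule ccontr)
    assume "word_eval \<sigma> u (word_subst a m us) \<noteq> 0"
    with top[OF subsetD[OF sF u(1)]] have "?k us \<le> ?k u" by (blast intro: key_boundedD)
    then have "?k u = ?k us" by (rule antisym[OF kmax[OF u(1)]])
    moreover have "word_subst a m u \<in> lists {a,b}" "word_subst a m us \<in> lists {a,b}"
      using word_subst_lists[OF m(1)] u(1) us(1) sF by auto
    ultimately have "word_subst a m u = word_subst a m us" by (intro word_key_inj)
    then show False
      using word_subst_inj[OF ab am, of u us] u subsetD[OF sF u(1)] subsetD[OF sF us(1)]
      by (auto simp: in_lists_conv_set)
  qed
  then have "fa_eval \<sigma> F (word_subst a m us) = F us * P m ^ count_list us a"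
    using fa_eval_at_single_word[OF fF us(1) others] top[OF subsetD[OF sF us(1)]] by simp
  then show ?thesis using that[OF us(1) kmax] by blast
qed

lemma fa_eval_subst_at_letter_eq_0:
  fixes F P :: "'x list \<Rightarrow> 'k::field" and a b :: 'x
  defines "\<sigma> \<equiv> \<lambda>c. if c = a then P else fa_var c"
  assumes ab: "a \<noteq> b" and sF: "supp F \<subseteq> lists {a,b}"
    and P: "supp P \<subseteq> lists {a,b}" and m: "m \<in> lists {a,b}" "key_bounded a b m P" and am: "a \<notin> set m"
  shows "fa_eval \<sigma> F [a] = 0"
proof -
  have "word_eval \<sigma> u [a] = 0" if u: "u \<in> supp F" for u
  proof (rule ccontr)
    assume "word_eval \<sigma> u [a] \<noteq> 0"
    with word_eval_subst_top[OF ab m(2) P m(1) subsetD[OF sF u], folded \<sigma>_def]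
    have "word_key a b [a] \<le> word_key a b (word_subst a m u)"
      by (blast intro: key_boundedD)
    then have "count_list [a] a \<le> count_list (word_subst a m u) a" by (rule word_key_le_count)
    moreover have "count_list (word_subst a m u) a = 0"
      using count_list_word_subst[OF ab, of u m] subsetD[OF sF u] am by (auto simp: in_lists_conv_set)
    ultimately show False by simp
  qed
  then show ?thesis by (simp add: fa_eval_supp)
qed

text \<open>A word of \<open>F\<close> with two letters \<open>a\<close> would make the top word of the substitution contain
  \<open>a\<close> at least twice.\<close>

lemma degree_le_one_if_subst_eq_var:
  fixes F P :: "'x list \<Rightarrow> 'k::field" and a b :: 'x
  defines "\<sigma> \<equiv> \<lambda>c. if c = a then P else fa_var c"
  assumes ab: "a \<noteq> b" and F: "F \<in> fa_carrier {a,b}" and P: "P \<in> fa_carrier {a,b}"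
    and E: "fa_eval \<sigma> F = fa_var a"
  shows "\<forall>u\<in>supp F. count_list u a \<le> 1"
proof (rule ccontr)
  assume "\<not> (\<forall>u\<in>supp F. count_list u a \<le> 1)"
  then obtain u0 where u0: "u0 \<in> supp F" "count_list u0 a \<ge> 2" by auto
  have sF: "supp F \<subseteq> lists {a,b}" and sP: "supp P \<subseteq> lists {a,b}"
    using F P by (auto simp: fa_carrier_iff)
  obtain m where mW: "m \<in> lists {a,b}" and dm: "key_bounded a b m P" and mP: "m \<in> supp P \<or> m = []"
    using exists_top_word[OF fa_carrier_finite_supp[OF P] sP] by blast
  have am: "a \<in> set m"
    using fa_eval_subst_at_letter_eq_0[OF ab sF sP mW dm, folded \<sigma>_def] E by (auto simp: fa_var_def)
  have "F \<noteq> (\<lambda>_. 0)" using u0(1) by (auto simp: supp_def)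
  then obtain us where us: "us \<in> supp F"
    and kmax: "\<And>u. u \<in> supp F \<Longrightarrow> word_key a b (word_subst a m u) \<le> word_key a b (word_subst a m us)"
    and coeff: "fa_eval \<sigma> F (word_subst a m us) = F us * P m ^ count_list us a"
    using fa_eval_subst_at_top[OF ab F _ sP mW dm am, folded \<sigma>_def] by blast
  have "P m \<noteq> 0" using mP am by (auto simp: supp_def)
  then have "fa_eval \<sigma> F (word_subst a m us) \<noteq> 0" using coeff us by (simp add: supp_def)
  then have "count_list (word_subst a m us) a = 1" using E by (simp add: fa_var_def split: if_splits)
  moreover have "count_list (word_subst a m u0) a \<le> count_list (word_subst a m us) a"
    using kmax[OF u0(1)] by (rule word_key_le_count)
  moreover have "count_list (word_subst a m u0) a = count_list u0 a * count_list m a"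
    using count_list_word_subst[OF ab, of u0 m] subsetD[OF sF u0(1)] by (auto simp: in_lists_conv_set)
  moreover have "count_list u0 a \<le> count_list u0 a * count_list m a"
    using am count_list_0_iff[of m a] by simp
  ultimately show False using u0(2) by linarith
qed

definition split_subst :: "'x \<Rightarrow> 'x \<Rightarrow> 'x \<Rightarrow> 'x \<Rightarrow> 'k::field \<Rightarrow> 'x \<Rightarrow> 'x list \<Rightarrow> 'k" where
  "split_subst q p' q1 q2 c d =
     (if d = q then fa_sub (fa_add (fa_var q1) (fa_var q2)) (fa_const c) else fa_var p')"

definition merge_letter :: "'x \<Rightarrow> 'x \<Rightarrow> 'x \<Rightarrow> 'x \<Rightarrow> 'x \<Rightarrow> 'x" where
  "merge_letter p q q1 q2 d = (if d = q1 \<or> d = q2 then q else p)"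

fun split_word :: "'x \<Rightarrow> 'x \<Rightarrow> 'x \<Rightarrow> 'x \<Rightarrow> 'x list \<Rightarrow> 'x list" where
  "split_word q p' q1 q2 [] = []"
| "split_word q p' q1 q2 (c # u) =
     (if c = q then q1 # map (\<lambda>e. if e = q then q2 else p') u else p' # split_word q p' q1 q2 u)"

lemma fa_mul_split_subst_split:
  "fa_mul (split_subst q p' q1 q2 c q) h t =
     - c * h t + (case t of [] \<Rightarrow> 0 | d # t' \<Rightarrow> ((if d = q1 then 1 else 0) + (if d = q2 then 1 else 0)) * h t')"
proof -
  let ?f = "split_subst q p' q1 q2 c q"
  have "?f v = 0" if "length v \<ge> 2" for v
    using that by (auto simp: split_subst_def fa_sub_def fa_add_def fa_var_def fa_const_def)
  moreover have "?f [] = - c" and "?f [d] = (if d = q1 then 1 else 0) + (if d = q2 then 1 else 0)" for d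
    by (auto simp: split_subst_def fa_sub_def fa_add_def fa_var_def fa_const_def)
  ultimately show ?thesis by (simp add: fa_mul_degree_le_one_left split: list.split)
qed

lemma fa_mul_split_subst_rename:
  "d \<noteq> q \<Longrightarrow> fa_mul (split_subst q p' q1 q2 c d) h t = (case t of [] \<Rightarrow> 0 | e # t' \<Rightarrow> if e = p' then h t' else 0)"
  by (simp add: split_subst_def fa_mul_var_left)

context
  fixes p q p' q1 q2 :: 'x and c0 :: "'k::field"
  assumes pq: "p \<noteq> q" and d1: "p' \<noteq> q1" and d2: "p' \<noteq> q2" and d3: "q1 \<noteq> q2"
begin

lemma word_eval_split_subst_nonzero:
  "set u \<subseteq> {p,q} \<Longrightarrow> word_eval (split_subst q p' q1 q2 c0) u t \<noteq> 0 \<Longrightarrow>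
     length t \<le> length u \<and> count_list t q1 + count_list t q2 \<le> count_list u q"
proof (induction u arbitrary: t)
  case Nil
  then show ?case by (simp add: fa_const_def split: if_splits)
next
  case (Cons c u)
  let ?h = "word_eval (split_subst q p' q1 q2 c0) u"
  show ?case
  proof (cases t)
    case Nil
    then show ?thesis by simp
  next
    case (Cons d t')
    show ?thesis
    proof (cases "c = q")
      case True
      have "?h t \<noteq> 0 \<or> ((d = q1 \<or> d = q2) \<and> ?h t' \<noteq> 0)"
        using Cons.prems(2) True \<open>t = d # t'\<close> by (auto simp: fa_mul_split_subst_split split: if_splits)
      then show ?thesis
        using Cons.IH[of t] Cons.IH[of t'] Cons.prems(1) True \<open>t = d # t'\<close> d3 by auto
    next
      case False
      then have "d = p'" and "?h t' \<noteq> 0"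
        using Cons.prems(2) \<open>t = d # t'\<close> by (auto simp: fa_mul_split_subst_rename split: if_splits)
      then show ?thesis using Cons.IH[of t'] Cons.prems(1) \<open>t = d # t'\<close> d1 d2 by auto
    qed
  qed
qed

lemma word_eval_split_subst_same_length:
  "set u \<subseteq> {p,q} \<Longrightarrow> length t = length u \<Longrightarrow>
     word_eval (split_subst q p' q1 q2 c0) u t
       = (if set t \<subseteq> {p',q1,q2} \<and> map (merge_letter p q q1 q2) t = u then 1 else 0)"
proof (induction u arbitrary: t)
  case Nil
  then show ?case by (simp add: fa_const_def)
next
  case (Cons c u)
  then obtain d t' where t: "t = d # t'" and l: "length t' = length u" by (cases t) auto
  have IH: "word_eval (split_subst q p' q1 q2 c0) u t'
      = (if set t' \<subseteq> {p',q1,q2} \<and> map (merge_letter p q q1 q2) t' = u then 1 else 0)"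
    using Cons l by simp
  have m: "merge_letter p q q1 q2 d = q \<longleftrightarrow> d = q1 \<or> d = q2" "merge_letter p q q1 q2 p' = p"
    using pq d1 d2 by (auto simp: merge_letter_def)
  show ?case
  proof (cases "c = q")
    case True
    have "word_eval (split_subst q p' q1 q2 c0) u t = 0"
      using word_eval_split_subst_nonzero[of u t] Cons.prems t l by fastforce
    then show ?thesis
      using True IH m d1 d2 d3 by (auto simp: t fa_mul_split_subst_split)
  next
    case False
    then have "c = p" using Cons.prems by simp
    then show ?thesis
      using False IH m pq d1 d2 by (auto simp: t fa_mul_split_subst_rename)
  qed
qed

lemma split_word_props:
  "set u \<subseteq> {p,q} \<Longrightarrow> length (split_word q p' q1 q2 u) = length u
     \<and> set (split_word q p' q1 q2 u) \<subseteq> {p',q1,q2}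
     \<and> map (merge_letter p q q1 q2) (split_word q p' q1 q2 u) = u
     \<and> (count_list u q \<ge> 2 \<longrightarrow> q1 \<in> set (split_word q p' q1 q2 u) \<and> q2 \<in> set (split_word q p' q1 q2 u))
     \<and> count_list (split_word q p' q1 q2 u) q1 + count_list (split_word q p' q1 q2 u) q2 = count_list u q"
proof (induction u)
  case (Cons c u)
  have u: "set u \<subseteq> {p,q}" using Cons.prems by simp
  have merge: "merge_letter p q q1 q2 q1 = q" "merge_letter p q q1 q2 p' = p"
    using d1 d2 by (auto simp: merge_letter_def)
  show ?case
  proof (cases "c = q")
    case True
    let ?v = "map (\<lambda>e. if e = q then q2 else p') u"
    have "map (merge_letter p q q1 q2) ?v = u"
      using u pq d1 d2 by (induction u) (auto simp: merge_letter_def)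
    moreover have "count_list ?v q1 = 0" and "count_list ?v q2 = count_list u q"
      and "count_list u q \<ge> 1 \<Longrightarrow> q2 \<in> set ?v"
      using d1 d2 d3 by (induction u) auto
    ultimately show ?thesis using True merge d1 d2 d3 by auto
  next
    case False
    then show ?thesis using Cons.IH[OF u] Cons.prems merge d1 d2 by auto
  qed
qed simp

lemma fa_eval_split_subst_at_split_word:
  assumes F: "F \<in> fa_carrier {p,q}" and u0: "u0 \<in> supp F" "count_list u0 q \<ge> 2"
    and longest: "\<And>u. u \<in> supp F \<Longrightarrow> count_list u q \<ge> 2 \<Longrightarrow> length u \<le> length u0"
  shows "fa_eval (split_subst q p' q1 q2 c0) F (split_word q p' q1 q2 u0) = F u0"
proof -
  let ?\<sigma> = "split_subst q p' q1 q2 c0" and ?W = "split_word q p' q1 q2 u0"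
  have fF: "finite (supp F)" and sF: "\<And>u. u \<in> supp F \<Longrightarrow> set u \<subseteq> {p,q}"
    using F by (auto simp: fa_carrier_iff in_lists_conv_set)
  have W: "length ?W = length u0" "set ?W \<subseteq> {p',q1,q2}" "map (merge_letter p q q1 q2) ?W = u0"
    "count_list ?W q1 + count_list ?W q2 = count_list u0 q"
    using split_word_props[OF sF[OF u0(1)]] by auto
  have "word_eval ?\<sigma> u ?W = 0" if u: "u \<in> supp F" "u \<noteq> u0" for u
  proof (rule ccontr)
    assume nz: "word_eval ?\<sigma> u ?W \<noteq> 0"
    then have "length ?W \<le> length u" and "count_list ?W q1 + count_list ?W q2 \<le> count_list u q"
      using word_eval_split_subst_nonzero[OF sF[OF u(1)]] by auto
    then have "length u = length u0" using longest[OF u(1)] W(1,4) u0(2) by simp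
    then show False using nz word_eval_split_subst_same_length[OF sF[OF u(1)]] W u(2) by simp
  qed
  then show ?thesis
    using fa_eval_at_single_word[OF fF u0(1), of ?\<sigma>] word_eval_split_subst_same_length[OF sF[OF u0(1)]] W
    by simp
qed

text \<open>Take a longest word \<open>u0\<close> of \<open>F\<close> with at least two letters \<open>q\<close>, and rename its first \<open>q\<close>
  to \<open>q1\<close>, the other \<open>q\<close>s to \<open>q2\<close> and every \<open>p\<close> to \<open>p'\<close>. The resulting word has coefficient
  \<open>F u0\<close> on the left-hand side of the identity, but it contains both \<open>q1\<close> and \<open>q2\<close>, so it does
  not occur on the right-hand side.\<close>

lemma degree_le_one_if_additive_subst:
  fixes F :: "'x list \<Rightarrow> 'k"
  assumes F: "F \<in> fa_carrier {p,q}"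
    and E: "fa_eval (split_subst q p' q1 q2 c0) F
              = fa_sub (fa_add (fa_eval (\<lambda>c. if c = q then fa_var q1 else fa_var p') F)
                               (fa_eval (\<lambda>c. if c = q then fa_var q2 else fa_var p') F)) (fa_const c0)"
  shows "\<forall>u\<in>supp F. count_list u q \<le> 1"
proof (rule ccontr)
  assume "\<not> (\<forall>u\<in>supp F. count_list u q \<le> 1)"
  then obtain u1 where u1: "u1 \<in> supp F" "count_list u1 q \<ge> 2" by auto
  have fF: "finite (supp F)" using F by (simp add: fa_carrier_finite_supp)
  let ?U = "{u\<in>supp F. count_list u q \<ge> 2}"
  have "Max (length ` ?U) \<in> length ` ?U" using fF u1 by (intro Max_in) auto
  then obtain u0 where u0: "u0 \<in> supp F" "count_list u0 q \<ge> 2" "length u0 = Max (length ` ?U)" by auto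
  have longest: "length u \<le> length u0" if "u \<in> supp F" "count_list u q \<ge> 2" for u
    using that fF u0(3) by simp
  let ?W = "split_word q p' q1 q2 u0"
  have q12: "q1 \<in> set ?W" "q2 \<in> set ?W"
    using split_word_props[of u0] F u0 by (auto simp: fa_carrier_iff in_lists_conv_set)
  have "fa_eval (\<lambda>c. if c = q then fa_var qi else fa_var p') F ?W = 0" if "qi \<in> {q1,q2}" for qi
  proof (rule ccontr)
    assume "fa_eval (\<lambda>c. if c = q then fa_var qi else fa_var p') F ?W \<noteq> 0"
    moreover have "fa_eval (\<lambda>c. if c = q then fa_var qi else fa_var p') F \<in> fa_carrier {p',qi}"
      by (rule fa_eval_carrier[OF F]) (auto intro: fa_var_carrier)
    ultimately have "set ?W \<subseteq> {p',qi}" by (rule fa_carrierD[rotated])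
    then show False using that q12 d1 d2 d3 by auto
  qed
  moreover have "fa_const c0 ?W = 0" using q12 by (auto simp: fa_const_def)
  ultimately have "F u0 = 0"
    using E fa_eval_split_subst_at_split_word[OF F u0(1,2) longest] by (simp add: fa_sub_def fa_add_def)
  then show False using u0(1) by (simp add: supp_def)
qed

end

section \<open>The laws of addition and multiplication\<close>

lemma words_of_degree_le_one:
  assumes "x \<noteq> y" and "set u \<subseteq> {x,y}" and "count_list u x \<le> 1" and "count_list u y \<le> 1"
  shows "u \<in> {[], [x], [y], [x,y], [y,x]}"
proof -
  have "length u = count_list u x + count_list u y"
    using sum_count_set[OF assms(2)] assms(1) by simp
  then have "length u \<le> 2" using assms(3,4) by simp
  then consider "u = []" | a where "u = [a]" | a b where "u = [a,b]"
    by (cases u; cases "tl u"; auto)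
  then show ?thesis using assms by cases (auto split: if_splits)
qed

definition shifted_mul :: "'k::field \<Rightarrow> 'k \<Rightarrow> ('x list \<Rightarrow> 'k) \<Rightarrow> ('x list \<Rightarrow> 'k) \<Rightarrow> ('x list \<Rightarrow> 'k)" where
  "shifted_mul k c a b = fa_add (fa_mul (fa_const k) (fa_mul (fa_sub a (fa_const c)) (fa_sub b (fa_const c)))) (fa_const c)"

lemma fa_eval_shifted_mul:
  "finite (supp a) \<Longrightarrow> finite (supp b) \<Longrightarrow>
     fa_eval \<sigma> (shifted_mul k c a b) = shifted_mul k c (fa_eval \<sigma> a) (fa_eval \<sigma> b)"
  by (simp add: shifted_mul_def fa_eval_add fa_eval_mul fa_eval_sub)

lemma shifted_mul_vars:
  "shifted_mul k c (fa_var a) (fa_var b) t =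
     k * ((if t = [a,b] then 1 else 0) - c * fa_var a t - c * (fa_var b t - fa_const c t)) + fa_const c t"
  unfolding shifted_mul_def fa_mul_sub_left fa_mul_sub_right fa_mul_const_left fa_mul_const_right
  by (simp add: fa_sub_def fa_add_def fa_smul_def fa_mul_var_var algebra_simps)

definition subst_compatible :: "(('x list \<Rightarrow> 'k::field) \<Rightarrow> ('x list \<Rightarrow> 'k) \<Rightarrow> ('x list \<Rightarrow> 'k)) \<Rightarrow> bool" where
  "subst_compatible op \<longleftrightarrow>
     (\<forall>A p q. p \<in> fa_carrier A \<longrightarrow> q \<in> fa_carrier A \<longrightarrow> op p q \<in> fa_carrier A)
   \<and> (\<forall>\<sigma> p q. finite (supp p) \<longrightarrow> finite (supp q) \<longrightarrow> fa_eval \<sigma> (op p q) = op (fa_eval \<sigma> p) (fa_eval \<sigma> q))"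

lemma subst_compatible_carrier:
  "subst_compatible op \<Longrightarrow> p \<in> fa_carrier A \<Longrightarrow> q \<in> fa_carrier A \<Longrightarrow> op p q \<in> fa_carrier A"
  by (simp add: subst_compatible_def)

lemma subst_compatible_fa_eval:
  "subst_compatible op \<Longrightarrow> finite (supp p) \<Longrightarrow> finite (supp q) \<Longrightarrow> fa_eval \<sigma> (op p q) = op (fa_eval \<sigma> p) (fa_eval \<sigma> q)"
  by (simp add: subst_compatible_def)

lemma subst_compatible_fa_add: "subst_compatible fa_add"
  by (simp add: subst_compatible_def fa_add_carrier fa_eval_add)

lemma subst_compatible_fa_mul: "subst_compatible fa_mul"
  by (simp add: subst_compatible_def fa_mul_carrier fa_eval_mul)

locale three_letters = var_fixing_auto \<Phi> x0
  for \<Phi> :: "'x set \<Rightarrow> 'x set \<Rightarrow> (('x list \<Rightarrow> 'k::field) \<Rightarrow> ('x list \<Rightarrow> 'k)) \<Rightarrow> (('x list \<Rightarrow> 'k) \<Rightarrow> ('x list \<Rightarrow> 'k))"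
    and x0 :: 'x +
  fixes x y z :: 'x
  assumes xy: "x \<noteq> y" and xz: "x \<noteq> z" and yz: "y \<noteq> z"
begin

definition subst_xy :: "('x list \<Rightarrow> 'k) \<Rightarrow> ('x list \<Rightarrow> 'k) \<Rightarrow> 'x \<Rightarrow> ('x list \<Rightarrow> 'k)" where
  "subst_xy u v = (\<lambda>c. if c = x then u else v)"

text \<open>By naturality of \<open>s\<close>, the law of an operation \<open>\<star>\<close> determines \<open>s (u \<star> v)\<close> from \<open>s u\<close>
  and \<open>s v\<close> in every free algebra.\<close>

definition law :: "(('x list \<Rightarrow> 'k) \<Rightarrow> ('x list \<Rightarrow> 'k) \<Rightarrow> ('x list \<Rightarrow> 'k)) \<Rightarrow> 'x list \<Rightarrow> 'k" where
  "law op = s {x,y} (op (fa_var x) (fa_var y))"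

context
  fixes op :: "('x list \<Rightarrow> 'k) \<Rightarrow> ('x list \<Rightarrow> 'k) \<Rightarrow> ('x list \<Rightarrow> 'k)"
  assumes op: "subst_compatible op"
begin

lemma law_carrier: "law op \<in> fa_carrier {x,y}"
  unfolding law_def by (intro s_carrier subst_compatible_carrier[OF op] fa_var_carrier) auto

lemma s_via_law:
  assumes B: "finite B" and u: "u \<in> fa_carrier B" and v: "v \<in> fa_carrier B"
  shows "s B (op u v) = fa_eval (subst_xy (s B u) (s B v)) (law op)"
proof -
  have "s B (op u v) = s B (fa_eval (subst_xy u v) (op (fa_var x) (fa_var y)))"
    using xy by (simp add: subst_compatible_fa_eval[OF op] subst_xy_def)
  also have "\<dots> = fa_eval (\<lambda>c. s B (subst_xy u v c)) (law op)"
    unfolding law_def using u v by (intro s_fa_eval[OF _ B]) (auto simp: subst_xy_def intro: subst_compatible_carrier[OF op] fa_var_carrier)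
  also have "\<dots> = fa_eval (subst_xy (s B u) (s B v)) (law op)"
    by (rule fa_eval_cong[OF law_carrier]) (auto simp: subst_xy_def)
  finally show ?thesis .
qed

lemma s_op_var_const:
  "s {x} (op (fa_var x) (fa_const c)) = fa_eval (subst_xy (fa_var x) (fa_const (s_scalar c))) (law op)"
  using s_via_law[of "{x}" "fa_var x" "fa_const c"] by (simp add: fa_var_carrier s_var s_const)

lemma law_assoc:
  assumes assoc: "\<And>a b c. op (op a b) c = op a (op b c)"
  shows "fa_eval (subst_xy (law op) (fa_var z)) (law op)
       = fa_eval (subst_xy (fa_var x) (fa_eval (subst_xy (fa_var y) (fa_var z)) (law op))) (law op)"
proof -
  let ?B = "{x,y,z}"
  have vx: "fa_var x \<in> fa_carrier ?B" and vy: "fa_var y \<in> fa_carrier ?B" and vz: "fa_var z \<in> fa_carrier ?B"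
    by (auto intro: fa_var_carrier)
  have fB: "finite ?B" by simp
  note via = s_via_law[OF fB]
  have "s ?B (op (fa_var x) (fa_var y)) = fa_eval (subst_xy (fa_var x) (fa_var y)) (law op)"
    using via[OF vx vy] by (simp add: s_var)
  also have "\<dots> = fa_eval fa_var (law op)"
    by (rule fa_eval_cong[OF law_carrier]) (auto simp: subst_xy_def)
  also have "\<dots> = law op"
    using law_carrier by (simp add: fa_eval_fa_var fa_carrier_finite_supp)
  finally have sxy: "s ?B (op (fa_var x) (fa_var y)) = law op" .
  have syz: "s ?B (op (fa_var y) (fa_var z)) = fa_eval (subst_xy (fa_var y) (fa_var z)) (law op)"
    using via[OF vy vz] by (simp add: s_var)
  have "s ?B (op (op (fa_var x) (fa_var y)) (fa_var z)) = fa_eval (subst_xy (law op) (fa_var z)) (law op)"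
    using via[OF subst_compatible_carrier[OF op vx vy] vz] by (simp add: s_var sxy)
  moreover have "s ?B (op (fa_var x) (op (fa_var y) (fa_var z)))
      = fa_eval (subst_xy (fa_var x) (fa_eval (subst_xy (fa_var y) (fa_var z)) (law op))) (law op)"
    using via[OF vx subst_compatible_carrier[OF op vy vz]] by (simp add: s_var syz)
  ultimately show ?thesis by (simp add: assoc)
qed

end

abbreviation bilinear_words :: "'x list set" where
  "bilinear_words \<equiv> {[], [x], [y], [x,y], [y,x]}"

lemma supp_subset_bilinear_words:
  assumes "F \<in> fa_carrier {x,y}" and "\<forall>u\<in>supp F. count_list u x \<le> 1" and "\<forall>u\<in>supp F. count_list u y \<le> 1"
  shows "supp F \<subseteq> bilinear_words"
proof
  fix u assume u: "u \<in> supp F"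
  then have "set u \<subseteq> {x,y}" using assms(1) by (auto simp: fa_carrier_iff)
  then show "u \<in> bilinear_words" using words_of_degree_le_one[OF xy] assms(2,3) u by blast
qed

lemma fa_eval_bilinear:
  fixes F :: "'x list \<Rightarrow> 'k"
  assumes "supp F \<subseteq> bilinear_words"
  shows "fa_eval \<sigma> F t = F [] * fa_const 1 t + F [x] * \<sigma> x t + F [y] * \<sigma> y t
     + F [x,y] * fa_mul (\<sigma> x) (\<sigma> y) t + F [y,x] * fa_mul (\<sigma> y) (\<sigma> x) t"
  using assms xy by (subst fa_eval_superset[of bilinear_words]) auto

lemma bilinear_expand:
  fixes F :: "'x list \<Rightarrow> 'k"
  assumes "supp F \<subseteq> bilinear_words"
  shows "F t = (if t = [] then F [] else 0) + (if t = [x] then F [x] else 0) + (if t = [y] then F [y] else 0)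
     + (if t = [x,y] then F [x,y] else 0) + (if t = [y,x] then F [y,x] else 0)"
proof (cases "t \<in> bilinear_words")
  case False
  then have "F t = 0" using assms by (auto simp: supp_def)
  then show ?thesis using False by auto
qed (use xy in auto)

lemma law_assoc_coeff:
  fixes F :: "'x list \<Rightarrow> 'k"
  assumes S: "supp F \<subseteq> bilinear_words"
    and E: "fa_eval (subst_xy F (fa_var z)) F = fa_eval (subst_xy (fa_var x) (fa_eval (subst_xy (fa_var y) (fa_var z)) F)) F"
  shows "F [x,y] * F [y,x] = 0"
proof -
  have out: "F t = 0" if "t \<notin> bilinear_words" for t using that S by (auto simp: supp_def)
  have "fa_eval (subst_xy F (fa_var z)) F [y,x,z]
      = fa_eval (subst_xy (fa_var x) (fa_eval (subst_xy (fa_var y) (fa_var z)) F)) F [y,x,z]"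
    using E by simp
  then show ?thesis
    using xy xz yz
    by (simp add: fa_eval_bilinear[OF S] subst_xy_def fa_mul_at_singleton fa_mul_at_pair fa_mul_at_triple
        fa_var_def fa_const_def out)
qed

end

context three_letters
begin

lemmas law_add_carrier = law_carrier[OF subst_compatible_fa_add]
lemmas s_add_via_law = s_via_law[OF subst_compatible_fa_add]
lemmas law_mul_carrier = law_carrier[OF subst_compatible_fa_mul]
lemmas s_mul_via_law = s_via_law[OF subst_compatible_fa_mul]

subsection \<open>Addition\<close>

text \<open>Subtracting a generator is inverted by adding it back, so substituting \<open>s (x - y)\<close> for \<open>x\<close>
  in the law of addition gives back \<open>x\<close>; hence the law has degree at most one in \<open>x\<close>, and likewise in \<open>y\<close>.\<close>

lemma supp_law_add: "supp (law fa_add) \<subseteq> bilinear_words"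
proof (rule supp_subset_bilinear_words[OF law_add_carrier])
  let ?P = "s {x,y} (fa_sub (fa_var x) (fa_var y))" and ?Q = "s {x,y} (fa_sub (fa_var y) (fa_var x))"
  have vx: "fa_var x \<in> fa_carrier {x,y}" and vy: "fa_var y \<in> fa_carrier {x,y}"
    by (auto intro: fa_var_carrier)
  have "fa_add (fa_sub (fa_var x) (fa_var y)) (fa_var y) = (fa_var x :: 'x list \<Rightarrow> 'k)"
    by (auto simp: fa_add_def fa_sub_def)
  then have "fa_eval (subst_xy ?P (fa_var y)) (law fa_add) = fa_var x"
    using s_add_via_law[OF _ fa_sub_carrier[OF vx vy] vy] by (simp add: s_var)
  moreover have "fa_eval (subst_xy ?P (fa_var y)) (law fa_add) = fa_eval (\<lambda>c. if c = x then ?P else fa_var c) (law fa_add)"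
    by (rule fa_eval_cong[OF law_add_carrier]) (auto simp: subst_xy_def)
  ultimately show "\<forall>u\<in>supp (law fa_add). count_list u x \<le> 1"
    by (intro degree_le_one_if_subst_eq_var[OF xy law_add_carrier s_carrier[OF _ fa_sub_carrier[OF vx vy]]]) simp_all
  have "fa_add (fa_var x) (fa_sub (fa_var y) (fa_var x)) = (fa_var y :: 'x list \<Rightarrow> 'k)"
    by (auto simp: fa_add_def fa_sub_def)
  then have "fa_eval (subst_xy (fa_var x) ?Q) (law fa_add) = fa_var y"
    using s_add_via_law[OF _ vx fa_sub_carrier[OF vy vx]] by (simp add: s_var)
  moreover have "fa_eval (subst_xy (fa_var x) ?Q) (law fa_add) = fa_eval (\<lambda>c. if c = y then ?Q else fa_var c) (law fa_add)"
    by (rule fa_eval_cong[OF law_add_carrier]) (auto simp: subst_xy_def xy)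
  moreover have "law fa_add \<in> fa_carrier {y,x}" and "?Q \<in> fa_carrier {y,x}"
    using law_add_carrier s_carrier[OF _ fa_sub_carrier[OF vy vx]] by (simp_all add: insert_commute)
  ultimately show "\<forall>u\<in>supp (law fa_add). count_list u y \<le> 1"
    using degree_le_one_if_subst_eq_var[OF xy[symmetric]] by simp
qed

lemma law_add_eq: "law fa_add = fa_sub (fa_add (fa_var x) (fa_var y)) (fa_const (s_scalar 0))"
proof -
  note S = supp_law_add
  let ?W = "law fa_add"
  have "fa_add (fa_var y) (fa_var x) = (fa_add (fa_var x) (fa_var y) :: 'x list \<Rightarrow> 'k)"
    by (auto simp: fa_add_def)
  then have comm: "?W = fa_eval (subst_xy (fa_var y) (fa_var x)) ?W"
    using s_add_via_law[of "{x,y}" "fa_var y" "fa_var x"] by (simp add: fa_var_carrier s_var law_def)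
  have comm1: "?W [x] = ?W [y]"
    using arg_cong[OF comm, of "\<lambda>f. f [x]"] xy
    by (simp add: fa_eval_bilinear[OF S] subst_xy_def fa_mul_at_singleton fa_var_def fa_const_def)
  have comm2: "?W [x,y] = ?W [y,x]"
    using arg_cong[OF comm, of "\<lambda>f. f [x,y]"] xy
    by (simp add: fa_eval_bilinear[OF S] subst_xy_def fa_mul_at_pair fa_var_def fa_const_def)
  have "?W [x,y] * ?W [y,x] = 0"
    by (rule law_assoc_coeff[OF S law_assoc[OF subst_compatible_fa_add]])
      (auto simp: fa_add_def)
  then have quadratic: "?W [x,y] = 0" "?W [y,x] = 0" using comm2 by auto
  have "fa_add (fa_var x) (fa_const 0) = (fa_var x :: 'x list \<Rightarrow> 'k)"
    by (auto simp: fa_add_def fa_const_def)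
  then have unit: "fa_var x = fa_eval (subst_xy (fa_var x) (fa_const (s_scalar 0))) ?W"
    using s_op_var_const[OF subst_compatible_fa_add, of 0] by (simp add: s_var)
  have unit0: "?W [] + ?W [y] * s_scalar 0 = 0"
    using arg_cong[OF unit, of "\<lambda>f. f []"] xy
    by (simp add: fa_eval_bilinear[OF S] subst_xy_def fa_var_def fa_const_def quadratic)
  have unit1: "?W [x] = 1"
    using arg_cong[OF unit, of "\<lambda>f. f [x]"] xy
    by (simp add: fa_eval_bilinear[OF S] subst_xy_def fa_mul_at_singleton fa_var_def fa_const_def quadratic)
  have const: "?W [] = - s_scalar 0" using unit0 unit1 comm1 by (simp add: eq_neg_iff_add_eq_0)
  show ?thesis
  proof
    fix t
    show "?W t = fa_sub (fa_add (fa_var x) (fa_var y)) (fa_const (s_scalar 0)) t"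
      using bilinear_expand[OF S, of t] const unit1 comm1 quadratic xy
      by (auto simp: fa_sub_def fa_add_def fa_var_def fa_const_def)
  qed
qed

lemma s_add:
  assumes "finite B" and "u \<in> fa_carrier B" and "v \<in> fa_carrier B"
  shows "s B (fa_add u v) = fa_sub (fa_add (s B u) (s B v)) (fa_const (s_scalar 0))"
  using xy by (simp add: s_add_via_law[OF assms] law_add_eq fa_eval_sub fa_eval_add subst_xy_def)

end

context three_letters
begin

subsection \<open>Multiplication\<close>

lemma law_mul_distrib_right:
  "fa_eval (subst_xy (fa_var x) (fa_sub (fa_add (fa_var y) (fa_var z)) (fa_const (s_scalar 0)))) (law fa_mul)
     = fa_sub (fa_add (fa_eval (subst_xy (fa_var x) (fa_var y)) (law fa_mul))
                      (fa_eval (subst_xy (fa_var x) (fa_var z)) (law fa_mul))) (fa_const (s_scalar 0))"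
proof -
  let ?B = "{x,y,z}"
  have fB: "finite ?B" by simp
  have vx: "fa_var x \<in> fa_carrier ?B" and vy: "fa_var y \<in> fa_carrier ?B" and vz: "fa_var z \<in> fa_carrier ?B"
    by (auto intro: fa_var_carrier)
  have "s ?B (fa_mul (fa_var x) (fa_add (fa_var y) (fa_var z)))
      = fa_eval (subst_xy (fa_var x) (fa_sub (fa_add (fa_var y) (fa_var z)) (fa_const (s_scalar 0)))) (law fa_mul)"
    using s_mul_via_law[OF fB vx fa_add_carrier[OF vy vz]] by (simp add: s_var s_add[OF fB vy vz])
  moreover have "s ?B (fa_add (fa_mul (fa_var x) (fa_var y)) (fa_mul (fa_var x) (fa_var z)))
      = fa_sub (fa_add (fa_eval (subst_xy (fa_var x) (fa_var y)) (law fa_mul))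
                       (fa_eval (subst_xy (fa_var x) (fa_var z)) (law fa_mul))) (fa_const (s_scalar 0))"
    by (simp add: s_add[OF fB fa_mul_carrier[OF vx vy] fa_mul_carrier[OF vx vz]]
        s_mul_via_law[OF fB vx vy] s_mul_via_law[OF fB vx vz] s_var)
  ultimately show ?thesis by (simp add: fa_mul_add_right)
qed

lemma law_mul_distrib_left:
  "fa_eval (subst_xy (fa_sub (fa_add (fa_var x) (fa_var y)) (fa_const (s_scalar 0))) (fa_var z)) (law fa_mul)
     = fa_sub (fa_add (fa_eval (subst_xy (fa_var x) (fa_var z)) (law fa_mul))
                      (fa_eval (subst_xy (fa_var y) (fa_var z)) (law fa_mul))) (fa_const (s_scalar 0))"
proof -
  let ?B = "{x,y,z}"
  have fB: "finite ?B" by simp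
  have vx: "fa_var x \<in> fa_carrier ?B" and vy: "fa_var y \<in> fa_carrier ?B" and vz: "fa_var z \<in> fa_carrier ?B"
    by (auto intro: fa_var_carrier)
  have "s ?B (fa_mul (fa_add (fa_var x) (fa_var y)) (fa_var z))
      = fa_eval (subst_xy (fa_sub (fa_add (fa_var x) (fa_var y)) (fa_const (s_scalar 0))) (fa_var z)) (law fa_mul)"
    using s_mul_via_law[OF fB fa_add_carrier[OF vx vy] vz] by (simp add: s_var s_add[OF fB vx vy])
  moreover have "s ?B (fa_add (fa_mul (fa_var x) (fa_var z)) (fa_mul (fa_var y) (fa_var z)))
      = fa_sub (fa_add (fa_eval (subst_xy (fa_var x) (fa_var z)) (law fa_mul))
                       (fa_eval (subst_xy (fa_var y) (fa_var z)) (law fa_mul))) (fa_const (s_scalar 0))"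
    by (simp add: s_add[OF fB fa_mul_carrier[OF vx vz] fa_mul_carrier[OF vy vz]]
        s_mul_via_law[OF fB vx vz] s_mul_via_law[OF fB vy vz] s_var)
  ultimately show ?thesis by (simp add: fa_mul_add_left)
qed

text \<open>Distributivity makes substitution into the law of multiplication additive in each
  variable, which bounds its degrees.\<close>

lemma supp_law_mul: "supp (law fa_mul) \<subseteq> bilinear_words"
proof (rule supp_subset_bilinear_words[OF law_mul_carrier])
  let ?W = "law fa_mul" and ?c = "fa_const (s_scalar 0)"
  have cong: "fa_eval \<sigma> ?W = fa_eval \<tau> ?W" if "\<sigma> x = \<tau> x" "\<sigma> y = \<tau> y" for \<sigma> \<tau>
    using that by (intro fa_eval_cong[OF law_mul_carrier]) auto
  have "fa_eval (split_subst y x y z (s_scalar 0)) ?W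
      = fa_eval (subst_xy (fa_var x) (fa_sub (fa_add (fa_var y) (fa_var z)) ?c)) ?W"
    using xy by (intro cong) (auto simp: split_subst_def subst_xy_def)
  also have "\<dots> = fa_sub (fa_add (fa_eval (\<lambda>c. if c = y then fa_var y else fa_var x) ?W)
                               (fa_eval (\<lambda>c. if c = y then fa_var z else fa_var x) ?W)) ?c"
    unfolding law_mul_distrib_right
    using cong[of "subst_xy (fa_var x) (fa_var y)" "\<lambda>c. if c = y then fa_var y else fa_var x"]
      cong[of "subst_xy (fa_var x) (fa_var z)" "\<lambda>c. if c = y then fa_var z else fa_var x"]
    by (simp add: subst_xy_def xy xy[symmetric])
  finally show "\<forall>u\<in>supp ?W. count_list u y \<le> 1"
    by (rule degree_le_one_if_additive_subst[OF xy xy xz yz law_mul_carrier])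
  have "fa_eval (split_subst x z x y (s_scalar 0)) ?W
      = fa_eval (subst_xy (fa_sub (fa_add (fa_var x) (fa_var y)) ?c) (fa_var z)) ?W"
    using xy by (intro cong) (auto simp: split_subst_def subst_xy_def)
  also have "\<dots> = fa_sub (fa_add (fa_eval (\<lambda>c. if c = x then fa_var x else fa_var z) ?W)
                               (fa_eval (\<lambda>c. if c = x then fa_var y else fa_var z) ?W)) ?c"
    unfolding law_mul_distrib_left
    using cong[of "subst_xy (fa_var x) (fa_var z)" "\<lambda>c. if c = x then fa_var x else fa_var z"]
      cong[of "subst_xy (fa_var y) (fa_var z)" "\<lambda>c. if c = x then fa_var y else fa_var z"]
    by (simp add: subst_xy_def xy xy[symmetric])
  finally have "fa_eval (split_subst x z x y (s_scalar 0)) ?W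
      = fa_sub (fa_add (fa_eval (\<lambda>c. if c = x then fa_var x else fa_var z) ?W)
                       (fa_eval (\<lambda>c. if c = x then fa_var y else fa_var z) ?W)) ?c" .
  moreover have "?W \<in> fa_carrier {y,x}" using law_mul_carrier by (simp add: insert_commute)
  ultimately show "\<forall>u\<in>supp ?W. count_list u x \<le> 1"
    by (intro degree_le_one_if_additive_subst[OF xy[symmetric] xz[symmetric] yz[symmetric] xy])
qed

lemma law_mul_coeffs:
  defines "k \<equiv> inverse (s_scalar 1 - s_scalar 0)" and "c \<equiv> s_scalar 0"
  shows "law fa_mul [x,y] * law fa_mul [y,x] = 0" and "law fa_mul [x,y] + law fa_mul [y,x] = k"
    and "law fa_mul [x] = - k * c" and "law fa_mul [y] = - k * c" and "law fa_mul [] = c + k * c * c"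
proof -
  note S = supp_law_mul
  let ?W = "law fa_mul" and ?e = "s_scalar 1"
  have ec: "?e - c \<noteq> 0" using s_scalar_one_neq_zero by (simp add: c_def)
  have "fa_mul (fa_var x) (fa_const 0) = (fa_const 0 :: 'x list \<Rightarrow> 'k)"
    by (auto simp: fa_mul_def fa_const_def)
  then have zero: "fa_const c = fa_eval (subst_xy (fa_var x) (fa_const c)) ?W"
    using s_op_var_const[OF subst_compatible_fa_mul, of 0] by (simp add: s_const c_def)
  have zero0: "?W [] + ?W [y] * c = c"
    using arg_cong[OF zero, of "\<lambda>f. f []"] xy
    by (simp add: fa_eval_bilinear[OF S] subst_xy_def fa_var_def fa_const_def)
  have zero1: "?W [x] + ?W [x,y] * c + ?W [y,x] * c = 0"
    using arg_cong[OF zero, of "\<lambda>f. f [x]"] xy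
    by (simp add: fa_eval_bilinear[OF S] subst_xy_def fa_mul_at_singleton fa_var_def fa_const_def)
  have one: "fa_var x = fa_eval (subst_xy (fa_var x) (fa_const ?e)) ?W"
    using s_op_var_const[OF subst_compatible_fa_mul, of 1] by (simp add: s_var)
  have one0: "?W [] + ?W [y] * ?e = 0"
    using arg_cong[OF one, of "\<lambda>f. f []"] xy
    by (simp add: fa_eval_bilinear[OF S] subst_xy_def fa_var_def fa_const_def)
  have one1: "?W [x] + ?W [x,y] * ?e + ?W [y,x] * ?e = 1"
    using arg_cong[OF one, of "\<lambda>f. f [x]"] xy
    by (simp add: fa_eval_bilinear[OF S] subst_xy_def fa_mul_at_singleton fa_var_def fa_const_def)
  show "?W [x,y] * ?W [y,x] = 0"
    by (rule law_assoc_coeff[OF S law_assoc[OF subst_compatible_fa_mul]]) (rule fa_mul_assoc)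
  have "(?W [x,y] + ?W [y,x]) * (?e - c) = 1" using zero1 one1 by algebra
  then show xy_yx: "?W [x,y] + ?W [y,x] = k" using ec by (simp add: k_def c_def field_simps)
  have "?W [x] = - (?W [x,y] + ?W [y,x]) * c" using zero1 by algebra
  then show "?W [x] = - k * c" using xy_yx by simp
  have "?W [y] * (?e - c) = (?W [] + ?W [y] * ?e) - (?W [] + ?W [y] * c)" by (simp add: algebra_simps)
  then have "?W [y] * (?e - c) = - c" using zero0 one0 by simp
  then show Wy: "?W [y] = - k * c" using ec by (simp add: k_def c_def field_simps)
  show "?W [] = c + k * c * c" using zero0 Wy by (simp add: algebra_simps)
qed

lemma law_mul_cases:
  defines "k \<equiv> inverse (s_scalar 1 - s_scalar 0)" and "c \<equiv> s_scalar 0"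
  shows "law fa_mul = shifted_mul k c (fa_var x) (fa_var y) \<or> law fa_mul = shifted_mul k c (fa_var y) (fa_var x)"
proof -
  let ?W = "law fa_mul"
  note coeffs = law_mul_coeffs[folded k_def c_def]
  show ?thesis
  proof (cases "?W [y,x] = 0")
    case True
    have "?W t = shifted_mul k c (fa_var x) (fa_var y) t" for t
      unfolding shifted_mul_vars bilinear_expand[OF supp_law_mul, of t]
      using True coeffs xy by (auto simp: fa_var_def fa_const_def algebra_simps)
    then show ?thesis by blast
  next
    case False
    then have "?W [x,y] = 0" using coeffs(1) by simp
    then have "?W t = shifted_mul k c (fa_var y) (fa_var x) t" for t
      unfolding shifted_mul_vars bilinear_expand[OF supp_law_mul, of t]
      using coeffs xy by (auto simp: fa_var_def fa_const_def algebra_simps)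
    then show ?thesis by blast
  qed
qed

lemma s_mul_shifted_iff:
  "(\<forall>A. finite A \<longrightarrow> (\<forall>u\<in>fa_carrier A. \<forall>v\<in>fa_carrier A. s A (fa_mul u v) = shifted_mul k c (s A u) (s A v)))
     \<longleftrightarrow> law fa_mul = shifted_mul k c (fa_var x) (fa_var y)"
proof
  assume "\<forall>A. finite A \<longrightarrow> (\<forall>u\<in>fa_carrier A. \<forall>v\<in>fa_carrier A. s A (fa_mul u v) = shifted_mul k c (s A u) (s A v))"
  then show "law fa_mul = shifted_mul k c (fa_var x) (fa_var y)"
    by (simp add: law_def fa_var_carrier s_var)
next
  assume "law fa_mul = shifted_mul k c (fa_var x) (fa_var y)"
  then show "\<forall>A. finite A \<longrightarrow> (\<forall>u\<in>fa_carrier A. \<forall>v\<in>fa_carrier A. s A (fa_mul u v) = shifted_mul k c (s A u) (s A v))"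
    using xy by (simp add: s_mul_via_law fa_eval_shifted_mul subst_xy_def)
qed

lemma s_mul_shifted_opp_iff:
  "(\<forall>A. finite A \<longrightarrow> (\<forall>u\<in>fa_carrier A. \<forall>v\<in>fa_carrier A. s A (fa_mul u v) = shifted_mul k c (s A v) (s A u)))
     \<longleftrightarrow> law fa_mul = shifted_mul k c (fa_var y) (fa_var x)"
proof
  assume "\<forall>A. finite A \<longrightarrow> (\<forall>u\<in>fa_carrier A. \<forall>v\<in>fa_carrier A. s A (fa_mul u v) = shifted_mul k c (s A v) (s A u))"
  then show "law fa_mul = shifted_mul k c (fa_var y) (fa_var x)"
    by (simp add: law_def fa_var_carrier s_var)
next
  assume "law fa_mul = shifted_mul k c (fa_var y) (fa_var x)"
  then show "\<forall>A. finite A \<longrightarrow> (\<forall>u\<in>fa_carrier A. \<forall>v\<in>fa_carrier A. s A (fa_mul u v) = shifted_mul k c (s A v) (s A u))"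
    using xy by (simp add: s_mul_via_law fa_eval_shifted_mul subst_xy_def)
qed

lemma s_mul_alternatives:
  defines "k \<equiv> inverse (s_scalar 1 - s_scalar 0)" and "c \<equiv> s_scalar 0"
  shows "(\<forall>A. finite A \<longrightarrow> (\<forall>u\<in>fa_carrier A. \<forall>v\<in>fa_carrier A. s A (fa_mul u v) = shifted_mul k c (s A u) (s A v)))
     \<longleftrightarrow> \<not> (\<forall>A. finite A \<longrightarrow> (\<forall>u\<in>fa_carrier A. \<forall>v\<in>fa_carrier A. s A (fa_mul u v) = shifted_mul k c (s A v) (s A u)))"
proof -
  have "k \<noteq> 0" using s_scalar_one_neq_zero by (simp add: k_def)
  then have "shifted_mul k c (fa_var x) (fa_var y) [x,y] \<noteq> shifted_mul k c (fa_var y) (fa_var x) (([x,y]) :: 'x list)"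
    unfolding shifted_mul_vars using xy by (simp add: fa_var_def fa_const_def)
  then have "shifted_mul k c (fa_var x) (fa_var y) \<noteq> shifted_mul k c (fa_var y) (fa_var x)" by metis
  then show ?thesis
    unfolding s_mul_shifted_iff s_mul_shifted_opp_iff using law_mul_cases[folded k_def c_def] by auto
qed

end

theorem mainTheorem8:
  fixes \<Phi> :: "'x set \<Rightarrow> 'x set \<Rightarrow> (('x list \<Rightarrow> 'k::field) \<Rightarrow> ('x list \<Rightarrow> 'k)) \<Rightarrow> (('x list \<Rightarrow> 'k) \<Rightarrow> ('x list \<Rightarrow> 'k))"
    and x0 :: 'x
  assumes infK: "infinite (UNIV :: 'k set)"
    and infX: "infinite (UNIV :: 'x set)"
    and auto: "obj_fixing_auto \<Phi>"
    and fixvars: "\<forall>A. finite A \<longrightarrow> (\<forall>x\<in>A. main_fun \<Phi> x0 A (fa_var x) = fa_var x)"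
  shows "\<exists>ts :: 'k \<Rightarrow> 'k. bij ts
     \<and> (\<forall>A. finite A \<longrightarrow> (\<forall>c. main_fun \<Phi> x0 A (fa_const c) = fa_const (ts c)))
     \<and> ts 1 \<noteq> ts 0
     \<and> (\<forall>A. finite A \<longrightarrow> (\<forall>u\<in>fa_carrier A. \<forall>v\<in>fa_carrier A.
          main_fun \<Phi> x0 A (fa_add u v)
            = fa_sub (fa_add (main_fun \<Phi> x0 A u) (main_fun \<Phi> x0 A v)) (fa_const (ts 0))))
     \<and> ((\<forall>A. finite A \<longrightarrow> (\<forall>u\<in>fa_carrier A. \<forall>v\<in>fa_carrier A.
          main_fun \<Phi> x0 A (fa_mul u v)
            = fa_add (fa_mul (fa_const (inverse (ts 1 - ts 0)))
                        (fa_mul (fa_sub (main_fun \<Phi> x0 A u) (fa_const (ts 0)))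
                                (fa_sub (main_fun \<Phi> x0 A v) (fa_const (ts 0)))))
                     (fa_const (ts 0))))
        \<longleftrightarrow> \<not> (\<forall>A. finite A \<longrightarrow> (\<forall>u\<in>fa_carrier A. \<forall>v\<in>fa_carrier A.
          main_fun \<Phi> x0 A (fa_mul u v)
            = fa_add (fa_mul (fa_const (inverse (ts 1 - ts 0)))
                        (fa_mul (fa_sub (main_fun \<Phi> x0 A v) (fa_const (ts 0)))
                                (fa_sub (main_fun \<Phi> x0 A u) (fa_const (ts 0)))))
                     (fa_const (ts 0)))))"
proof -
  obtain B :: "'x set" where "finite B" "card B = 3"
    using infinite_arbitrarily_large[OF infX] by blast
  then obtain x y z :: 'x where "x \<noteq> y" "x \<noteq> z" "y \<noteq> z"
    by (auto simp: card_3_iff)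
  then interpret three_letters \<Phi> x0 x y z
    using auto fixvars by unfold_locales auto
  have "\<forall>A. finite A \<longrightarrow> (\<forall>c. main_fun \<Phi> x0 A (fa_const c) = fa_const (s_scalar c))"
    by (simp add: s_const)
  moreover have "\<forall>A. finite A \<longrightarrow> (\<forall>u\<in>fa_carrier A. \<forall>v\<in>fa_carrier A.
      main_fun \<Phi> x0 A (fa_add u v) = fa_sub (fa_add (main_fun \<Phi> x0 A u) (main_fun \<Phi> x0 A v)) (fa_const (s_scalar 0)))"
    by (simp add: s_add)
  ultimately show ?thesis
    using s_scalar_bij s_scalar_one_neq_zero s_mul_alternatives[unfolded shifted_mul_def]
    by (intro exI[of _ s_scalar]) blast
qed

end
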